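(* There is an algorithm which, given as input an interpreted automatic structure $(\Gamma,\iota)$ describing a monoid $M$ and a word $w$ over the generators, decides whether $\sigma(w)$ is a unit of $M$ (where $\sigma$ is the interpretation consistent with $\iota$).
   Context: Let $A$ be a finite alphabet, $\$ \notin A$, and let $\delta$ send a pair of words over $A$ to the word over $(A\cup\{\$\})\times(A\cup\{\$\})$ obtained by padding the shorter word on the right with $\$$ and reading both letter by letter. A synchronous automaton recognises a relation $R$ if it accepts exactly $\delta(R)$. A pre-automatic structure $\Gamma$ consists of a finite alphabet $A$, a finite automaton recognising $L\subseteq A^*$, a synchronous automaton recognising $L_=\subseteq L\times L$, and for each $a\in A$ a synchronous automaton recognising $L_a\subseteq L\times L$. An interpretation with respect to a semigroup $S$ is a morphism $\sigma:A^*\to S$ with $\sigma(L)=S$ such that for $u,v\in L$: $(u,v)\in L_=$ iff $\sigma(u)=\sigma(v)$, and $(u,v)\in L_a$ iff $\sigma(ua)=\sigma(v)$. An assignment of generators is a function $\iota:A\to L$ for which there exists an interpretation $\sigma$ with $\sigma(a)=\sigma(\iota(a))$ for all $a\in A$ (such $\sigma$ is consistent with $\iota$). An interpreted automatic structure is a pair $(\Gamma,\iota)$, given as the automata of $\Gamma$ together with the words $\iota(a)$. A unit of a monoid $M$ with identity $1$ is an element $s$ having $t,t'\in M$ with $st=1=t's$. *)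

theory Defs
  imports "HOL-Algebra.Group" "HOL-Library.Nat_Bijection"
begin

datatype recf =
    Zr
  | Sc
  | Pj nat
  | Cn recf "recf list"
  | Pr recf recf
  | Mn recf

inductive rec_eval :: "recf \<Rightarrow> nat list \<Rightarrow> nat \<Rightarrow> bool" where
  eval_Zr: "rec_eval Zr xs 0"
| eval_Sc: "rec_eval Sc (x # xs) (Suc x)"
| eval_Pj: "i < length xs \<Longrightarrow> rec_eval (Pj i) xs (xs ! i)"
| eval_Cn: "list_all2 (\<lambda>g y. rec_eval g xs y) gs ys \<Longrightarrow> rec_eval f ys r
             \<Longrightarrow> rec_eval (Cn f gs) xs r"
| eval_Pr0: "rec_eval f xs r \<Longrightarrow> rec_eval (Pr f g) (0 # xs) r"
| eval_PrS: "rec_eval (Pr f g) (n # xs) r0 \<Longrightarrow> rec_eval g (r0 # n # xs) r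
             \<Longrightarrow> rec_eval (Pr f g) (Suc n # xs) r"
| eval_Mn: "rec_eval f (n # xs) 0 \<Longrightarrow> (\<forall>m<n. \<exists>r. rec_eval f (m # xs) r \<and> r \<noteq> 0)
             \<Longrightarrow> rec_eval (Mn f) xs n"

fun enc_list :: "nat list \<Rightarrow> nat" where
  "enc_list [] = 0"
| "enc_list (x # xs) = Suc (prod_encode (x, enc_list xs))"

definition enc_opt :: "nat option \<Rightarrow> nat" where
  "enc_opt x = (case x of None \<Rightarrow> 0 | Some a \<Rightarrow> Suc a)"

definition enc_pair_letter :: "nat option \<times> nat option \<Rightarrow> nat" where
  "enc_pair_letter p = prod_encode (enc_opt (fst p), enc_opt (snd p))"

text \<open>A (nondeterministic) finite automaton over letters of type 'l:
  a list of transitions (p, letter, q), a list of initial and a list of final states.\<close>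
type_synonym 'l nfa = "(nat \<times> 'l \<times> nat) list \<times> nat list \<times> nat list"

fun reach :: "(nat \<times> 'l \<times> nat) list \<Rightarrow> nat \<Rightarrow> 'l list \<Rightarrow> nat \<Rightarrow> bool" where
  "reach tr p [] q = (p = q)"
| "reach tr p (x # xs) q = (\<exists>p'. (p, x, p') \<in> set tr \<and> reach tr p' xs q)"

definition lang :: "'l nfa \<Rightarrow> 'l list set" where
  "lang N = (case N of (tr, ini, fin) \<Rightarrow>
     {w. \<exists>p\<in>set ini. \<exists>q\<in>set fin. reach tr p w q})"

definition nfa_letters :: "'l nfa \<Rightarrow> 'l set" where
  "nfa_letters N = (case N of (tr, ini, fin) \<Rightarrow> (\<lambda>(p, x, q). x) ` set tr)"

definition enc_nfa :: "('l \<Rightarrow> nat) \<Rightarrow> 'l nfa \<Rightarrow> nat" where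
  "enc_nfa e N = (case N of (tr, ini, fin) \<Rightarrow>
     enc_list [enc_list (map (\<lambda>(p, x, q). enc_list [p, e x, q]) tr), enc_list ini, enc_list fin])"

section \<open>Padded convolution delta of two words (None plays the role of the padding symbol)\<close>

definition pad_conv :: "nat list \<Rightarrow> nat list \<Rightarrow> (nat option \<times> nat option) list" where
  "pad_conv u v = zip (map Some u @ replicate (length v - length u) None)
                      (map Some v @ replicate (length u - length v) None)"

text \<open>The alphabet is A = {0..<k}. Input data:
  NL recognises L; Neq recognises L_=; Na ! a recognises L_a (a < k); io ! a is the word iota(a).\<close>

definition pre_automatic ::
  "nat \<Rightarrow> nat nfa \<Rightarrow> (nat option \<times> nat option) nfa \<Rightarrow> (nat option \<times> nat option) nfa list \<Rightarrow> bool" where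
  "pre_automatic k NL Neq Na \<longleftrightarrow>
     length Na = k \<and>
     nfa_letters NL \<subseteq> {0..<k} \<and>
     (\<forall>N \<in> insert Neq (set Na).
        nfa_letters N \<subseteq> (insert None (Some ` {0..<k})) \<times> (insert None (Some ` {0..<k})) \<and>
        lang N \<subseteq> {pad_conv u v | u v. u \<in> lang NL \<and> v \<in> lang NL})"

definition word_morphism :: "nat \<Rightarrow> nat monoid \<Rightarrow> (nat list \<Rightarrow> nat) \<Rightarrow> bool" where
  "word_morphism k M \<sigma> \<longleftrightarrow>
     \<sigma> [] = \<one>\<^bsub>M\<^esub> \<and>
     (\<forall>u \<in> lists {0..<k}. \<sigma> u \<in> carrier M) \<and>
     (\<forall>u \<in> lists {0..<k}. \<forall>v \<in> lists {0..<k}. \<sigma> (u @ v) = \<sigma> u \<otimes>\<^bsub>M\<^esub> \<sigma> v)"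

definition is_interpretation ::
  "nat \<Rightarrow> nat nfa \<Rightarrow> (nat option \<times> nat option) nfa \<Rightarrow> (nat option \<times> nat option) nfa list
    \<Rightarrow> nat monoid \<Rightarrow> (nat list \<Rightarrow> nat) \<Rightarrow> bool" where
  "is_interpretation k NL Neq Na M \<sigma> \<longleftrightarrow>
     word_morphism k M \<sigma> \<and>
     \<sigma> ` lang NL = carrier M \<and>
     (\<forall>u \<in> lang NL. \<forall>v \<in> lang NL. pad_conv u v \<in> lang Neq \<longleftrightarrow> \<sigma> u = \<sigma> v) \<and>
     (\<forall>a < k. \<forall>u \<in> lang NL. \<forall>v \<in> lang NL.
        pad_conv u v \<in> lang (Na ! a) \<longleftrightarrow> \<sigma> (u @ [a]) = \<sigma> v)"

definition consistent_with ::
  "nat \<Rightarrow> nat nfa \<Rightarrow> nat list list \<Rightarrow> (nat list \<Rightarrow> nat) \<Rightarrow> bool" where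
  "consistent_with k NL io \<sigma> \<longleftrightarrow>
     length io = k \<and> (\<forall>a < k. io ! a \<in> lang NL \<and> \<sigma> [a] = \<sigma> (io ! a))"

definition enc_input ::
  "nat \<Rightarrow> nat nfa \<Rightarrow> (nat option \<times> nat option) nfa \<Rightarrow> (nat option \<times> nat option) nfa list
    \<Rightarrow> nat list list \<Rightarrow> nat list \<Rightarrow> nat" where
  "enc_input k NL Neq Na io w =
     enc_list [k, enc_nfa id NL, enc_nfa enc_pair_letter Neq,
               enc_list (map (enc_nfa enc_pair_letter) Na),
               enc_list (map enc_list io), enc_list w]"

end

theory Submission
  imports Defs
begin

text \<open>
  An element \<open>s = \<sigma> w\<close> of a monoid is a unit iff it has a left inverse \<open>t\<close> and then also
  \<open>s t = 1\<close>. Both conditions are decided on the automatic structure. A word \<open>e \<in> L\<close>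
  representing \<open>1\<close> is found by unbounded search. A left inverse exists iff there is a chain
  \<open>x = y\<^sub>0, y\<^sub>1, \<dots>, y\<^sub>n = e\<close> of words of \<open>L\<close> with \<open>(y\<^sub>i, y\<^sub>i\<^sub>+\<^sub>1) \<in> L\<^bsub>w\<^sub>i\<^esub>\<close>; by a
  pigeonhole argument on simultaneous runs of the automata for \<open>L\<^bsub>w\<^sub>i\<^esub>\<close>, positions can be cut
  out of all words of a long chain at once, so a chain exists iff one with words of bounded
  length exists, and a bounded search decides this. If a left inverse \<open>\<sigma> x\<close> is found, an
  unbounded search finds a chain from \<open>e\<close> along \<open>w x\<close>, whose last word represents \<open>s \<sigma> x\<close>,
  and the automaton for \<open>L\<^sub>=\<close> decides whether this is \<open>1\<close>.
\<close>

fun rf_const :: "nat \<Rightarrow> recf" where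
  "rf_const 0 = Zr"
| "rf_const (Suc n) = Cn Sc [rf_const n]"

lemma rec_eval_Cn1: "rec_eval g xs y \<Longrightarrow> rec_eval f [y] r \<Longrightarrow> rec_eval (Cn f [g]) xs r"
  by (rule eval_Cn[where ys="[y]"]) auto

lemma rec_eval_Cn2:
  "rec_eval g1 xs y1 \<Longrightarrow> rec_eval g2 xs y2 \<Longrightarrow> rec_eval f [y1, y2] r \<Longrightarrow> rec_eval (Cn f [g1, g2]) xs r"
  by (rule eval_Cn[where ys="[y1, y2]"]) auto

lemma rec_eval_PjI: "i < length xs \<Longrightarrow> y = xs ! i \<Longrightarrow> rec_eval (Pj i) xs y"
  using eval_Pj by blast

lemma rec_eval_Sc1: "rec_eval Sc [x] (Suc x)"
  using eval_Sc by blast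

lemma rec_eval_rf_const: "rec_eval (rf_const n) xs n"
  by (induction n) (simp_all add: eval_Zr rec_eval_Cn1 rec_eval_Sc1)

definition "rf_add = Pr (Pj 0) (Cn Sc [Pj 0])"

lemma rec_eval_rf_add: "rec_eval rf_add [x, y] (x + y)"
proof (induction x)
  case 0
  then show ?case unfolding rf_add_def by (auto intro!: eval_Pr0 rec_eval_PjI)
next
  case (Suc x)
  show ?case unfolding rf_add_def
    by (rule eval_PrS[OF Suc[unfolded rf_add_def]]) (auto intro!: rec_eval_Cn1 rec_eval_PjI rec_eval_Sc1)
qed

lemma rec_eval_rf_addI: "r = x + y \<Longrightarrow> rec_eval rf_add [x, y] r"
  using rec_eval_rf_add by simp

definition "rf_mul = Pr Zr (Cn rf_add [Pj 0, Pj 2])"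

lemma rec_eval_rf_mul: "rec_eval rf_mul [x, y] (x * y)"
proof (induction x)
  case 0
  then show ?case unfolding rf_mul_def by (auto intro!: eval_Pr0 eval_Zr)
next
  case (Suc x)
  show ?case unfolding rf_mul_def
    by (rule eval_PrS[OF Suc[unfolded rf_mul_def]]) (auto intro!: rec_eval_Cn2 rec_eval_PjI rec_eval_rf_addI)
qed

definition "rf_pred = Pr Zr (Pj 1)"

lemma rec_eval_rf_pred: "rec_eval rf_pred [x] (x - 1)"
proof (induction x)
  case 0
  then show ?case unfolding rf_pred_def by (auto intro!: eval_Pr0 eval_Zr)
next
  case (Suc n)
  show ?case unfolding rf_pred_def
    by (rule eval_PrS[OF Suc[unfolded rf_pred_def]]) (auto intro!: rec_eval_PjI)
qed

text \<open>Primitive recursion runs over the first argument, so truncated subtraction is first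
  programmed with its arguments swapped.\<close>

definition "rf_diff = Pr (Pj 0) (Cn rf_pred [Pj 0])"

lemma rec_eval_rf_diff: "rec_eval rf_diff [y, x] (x - y)"
proof (induction y)
  case 0
  then show ?case unfolding rf_diff_def by (auto intro!: eval_Pr0 rec_eval_PjI)
next
  case (Suc y)
  have "x - Suc y = (x - y) - 1" by simp
  then show ?case unfolding rf_diff_def
    by (intro eval_PrS[OF Suc[unfolded rf_diff_def]])
       (auto intro!: rec_eval_Cn1 rec_eval_PjI simp: rec_eval_rf_pred[of "x - y", simplified])
qed

definition "rf_sub = Cn rf_diff [Pj 1, Pj 0]"

lemma rec_eval_rf_sub: "rec_eval rf_sub [x, y] (x - y)"
  unfolding rf_sub_def by (auto intro!: rec_eval_Cn2 rec_eval_PjI rec_eval_rf_diff)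

definition "rf_triangle = Pr Zr (Cn rf_add [Pj 0, Cn Sc [Pj 1]])"

lemma rec_eval_rf_triangle: "rec_eval rf_triangle [n] (triangle n)"
proof (induction n)
  case 0
  then show ?case unfolding rf_triangle_def by (auto intro!: eval_Pr0 eval_Zr)
next
  case (Suc n)
  show ?case unfolding rf_triangle_def
    by (rule eval_PrS[OF Suc[unfolded rf_triangle_def]])
       (auto intro!: rec_eval_Cn2 rec_eval_Cn1 rec_eval_PjI rec_eval_Sc1 rec_eval_rf_addI)
qed

definition c_pair :: "nat \<Rightarrow> nat \<Rightarrow> nat" where "c_pair a b = prod_encode (a, b)"
definition c_fst :: "nat \<Rightarrow> nat" where "c_fst p = fst (prod_decode p)"
definition c_snd :: "nat \<Rightarrow> nat" where "c_snd p = snd (prod_decode p)"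

lemma c_fst_c_pair [simp]: "c_fst (c_pair a b) = a"
  and c_snd_c_pair [simp]: "c_snd (c_pair a b) = b"
  by (simp_all add: c_fst_def c_snd_def c_pair_def)

lemma c_pair_c_fst_c_snd [simp]: "c_pair (c_fst p) (c_snd p) = p"
  by (simp add: c_fst_def c_snd_def c_pair_def)

lemma c_pair_ge1: "a \<le> c_pair a b"
  and c_pair_ge2: "b \<le> c_pair a b"
  by (simp_all add: c_pair_def le_prod_encode_1 le_prod_encode_2)

lemma c_pair_mono: "a \<le> a' \<Longrightarrow> b \<le> b' \<Longrightarrow> c_pair a b \<le> c_pair a' b'"
proof -
  assume "a \<le> a'" "b \<le> b'"
  then have "triangle (a + b) \<le> triangle (a' + b')"
    unfolding triangle_def by (intro div_le_mono mult_le_mono) auto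
  then show ?thesis using \<open>a \<le> a'\<close> by (simp add: c_pair_def prod_encode_def)
qed

lemma c_snd_0 [simp]: "c_snd 0 = 0"
  using prod_encode_inverse[of "(0, 0)"] by (simp add: c_snd_def prod_encode_def)

definition "rf_pair = Cn rf_add [Cn rf_triangle [rf_add], Pj 0]"

lemma rec_eval_rf_pair: "rec_eval rf_pair [a, b] (c_pair a b)"
  unfolding rf_pair_def c_pair_def prod_encode_def
  by (auto intro!: rec_eval_Cn2 rec_eval_Cn1 rec_eval_PjI rec_eval_rf_add rec_eval_rf_triangle)

definition "rf_diagonal = Mn (Cn rf_sub [Cn Sc [Pj 1], Cn rf_triangle [Cn Sc [Pj 0]]])"

lemma less_triangle_Suc_self: "p < triangle (Suc p)"
  by (induction p) auto

lemma rec_eval_rf_diagonal: "rec_eval rf_diagonal [p] (LEAST s. p < triangle (Suc s))"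
proof -
  let ?F = "Cn rf_sub [Cn Sc [Pj 1], Cn rf_triangle [Cn Sc [Pj 0]]]"
  let ?s = "LEAST s. p < triangle (Suc s)"
  have F: "rec_eval ?F [s, p] (Suc p - triangle (Suc s))" for s
    by (intro rec_eval_Cn2[OF _ _ rec_eval_rf_sub] rec_eval_Cn1[OF _ rec_eval_Sc1]
          rec_eval_Cn1[OF _ rec_eval_rf_triangle] rec_eval_PjI) auto
  have "p < triangle (Suc ?s)"
    using less_triangle_Suc_self by (rule LeastI)
  then have "rec_eval ?F [?s, p] 0"
    using F[of ?s] by simp
  moreover have "\<exists>r. rec_eval ?F [m, p] r \<and> r \<noteq> 0" if "m < ?s" for m
  proof -
    have "\<not> p < triangle (Suc m)" using that not_less_Least by blast
    then show ?thesis using F[of m] by (intro exI[of _ "Suc p - triangle (Suc m)"]) auto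
  qed
  ultimately show ?thesis
    unfolding rf_diagonal_def by (intro eval_Mn) auto
qed

lemma c_fst_c_snd_via_diagonal:
  fixes p :: nat
  defines "s \<equiv> LEAST s. p < triangle (Suc s)"
  shows "c_fst p = p - triangle s" "c_snd p = s - (p - triangle s)"
proof -
  have lt: "p < triangle (Suc s)"
    unfolding s_def using less_triangle_Suc_self by (rule LeastI)
  have ge: "triangle s \<le> p"
  proof (cases s)
    case (Suc t)
    then have "\<not> p < triangle (Suc t)" unfolding s_def using not_less_Least lessI by metis
    then show ?thesis using Suc by simp
  qed simp
  have "prod_decode p = (p - triangle s, s - (p - triangle s))"
    using prod_decode_triangle_add[of s "p - triangle s"] ge lt by (simp add: prod_decode_aux.simps)
  then show "c_fst p = p - triangle s" "c_snd p = s - (p - triangle s)"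
    by (simp_all add: c_fst_def c_snd_def)
qed

definition "rf_fst = Cn rf_sub [Pj 0, Cn rf_triangle [rf_diagonal]]"
definition "rf_snd = Cn rf_sub [rf_diagonal, rf_fst]"

lemma rec_eval_rf_fst: "rec_eval rf_fst [p] (c_fst p)"
  unfolding rf_fst_def c_fst_c_snd_via_diagonal
  by (auto intro!: rec_eval_Cn2 rec_eval_Cn1 rec_eval_PjI rec_eval_rf_sub rec_eval_rf_triangle
      rec_eval_rf_diagonal)

lemma rec_eval_rf_snd: "rec_eval rf_snd [p] (c_snd p)"
  unfolding rf_snd_def c_fst_c_snd_via_diagonal(2)
  using rec_eval_rf_fst[of p] unfolding c_fst_c_snd_via_diagonal(1)
  by (auto intro!: rec_eval_Cn2 rec_eval_rf_sub rec_eval_rf_diagonal)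

section \<open>Computable functions\<close>

text \<open>Functions of several arguments are computed on Cantor pairs of their arguments.\<close>

definition computable_on :: "nat set \<Rightarrow> (nat \<Rightarrow> nat) \<Rightarrow> bool" where
  "computable_on D f \<longleftrightarrow> (\<exists>c. \<forall>x\<in>D. rec_eval c [x] (f x))"

abbreviation decidable_on :: "nat set \<Rightarrow> (nat \<Rightarrow> bool) \<Rightarrow> bool" where
  "decidable_on D P \<equiv> computable_on D (\<lambda>x. of_bool (P x))"

lemma computable_const: "computable_on D (\<lambda>x. c)"
  unfolding computable_on_def using rec_eval_rf_const by blast

lemma computable_id: "computable_on D (\<lambda>x. x)"
  unfolding computable_on_def by (auto intro!: exI[of _ "Pj 0"] rec_eval_PjI)

lemma computable_comp:
  assumes "computable_on E f" "computable_on D g" "\<And>x. x \<in> D \<Longrightarrow> g x \<in> E"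
  shows "computable_on D (\<lambda>x. f (g x))"
proof -
  obtain cf where "\<forall>x\<in>E. rec_eval cf [x] (f x)" using assms(1) unfolding computable_on_def by blast
  moreover obtain cg where "\<forall>x\<in>D. rec_eval cg [x] (g x)" using assms(2) unfolding computable_on_def by blast
  ultimately show ?thesis unfolding computable_on_def using assms(3)
    by (intro exI[of _ "Cn cf [cg]"]) (auto intro: rec_eval_Cn1)
qed

lemma computable_comp_program:
  assumes "\<And>a. rec_eval c [a] (h a)" "computable_on D f"
  shows "computable_on D (\<lambda>x. h (f x))"
  using computable_comp[of UNIV h D f] assms unfolding computable_on_def by blast

lemma computable_comp_program2:
  assumes "\<And>a b. rec_eval c [a, b] (h a b)" "computable_on D f" "computable_on D g"
  shows "computable_on D (\<lambda>x. h (f x) (g x))"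
proof -
  obtain cf where "\<forall>x\<in>D. rec_eval cf [x] (f x)" using assms(2) unfolding computable_on_def by blast
  moreover obtain cg where "\<forall>x\<in>D. rec_eval cg [x] (g x)" using assms(3) unfolding computable_on_def by blast
  ultimately show ?thesis unfolding computable_on_def using assms(1)
    by (intro exI[of _ "Cn c [cf, cg]"]) (auto intro: rec_eval_Cn2)
qed

lemma computable_add: "computable_on D f \<Longrightarrow> computable_on D g \<Longrightarrow> computable_on D (\<lambda>x. f x + g x)"
  by (rule computable_comp_program2[OF rec_eval_rf_add])

lemma computable_mult: "computable_on D f \<Longrightarrow> computable_on D g \<Longrightarrow> computable_on D (\<lambda>x. f x * g x)"
  by (rule computable_comp_program2[OF rec_eval_rf_mul])

lemma computable_diff: "computable_on D f \<Longrightarrow> computable_on D g \<Longrightarrow> computable_on D (\<lambda>x. f x - g x)"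
  by (rule computable_comp_program2[OF rec_eval_rf_sub])

lemma computable_c_pair:
  "computable_on D f \<Longrightarrow> computable_on D g \<Longrightarrow> computable_on D (\<lambda>x. c_pair (f x) (g x))"
  by (rule computable_comp_program2[OF rec_eval_rf_pair])

lemma computable_Suc: "computable_on D f \<Longrightarrow> computable_on D (\<lambda>x. Suc (f x))"
  by (rule computable_comp_program[OF rec_eval_Sc1])

lemma computable_c_fst: "computable_on D f \<Longrightarrow> computable_on D (\<lambda>x. c_fst (f x))"
  by (rule computable_comp_program[OF rec_eval_rf_fst])

lemma computable_c_snd: "computable_on D f \<Longrightarrow> computable_on D (\<lambda>x. c_snd (f x))"
  by (rule computable_comp_program[OF rec_eval_rf_snd])

lemma computable_binary:
  assumes "computable_on UNIV (\<lambda>q. F (c_fst q) (c_snd q))" "computable_on D a" "computable_on D b"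
  shows "computable_on D (\<lambda>x. F (a x) (b x))"
  using computable_comp[OF assms(1) computable_c_pair[OF assms(2,3)]] by simp

lemma computable_rec_nat:
  assumes "computable_on UNIV a"
    and "computable_on UNIV (\<lambda>q. h (c_fst q) (c_fst (c_snd q)) (c_snd (c_snd q)))"
    and "computable_on D n"
  shows "computable_on D (\<lambda>x. rec_nat (a x) (h x) (n x))"
proof -
  obtain ca where ca: "\<And>x. rec_eval ca [x] (a x)"
    using assms(1) unfolding computable_on_def by blast
  obtain ch where ch: "\<And>q. rec_eval ch [q] (h (c_fst q) (c_fst (c_snd q)) (c_snd (c_snd q)))"
    using assms(2) unfolding computable_on_def by blast
  obtain cn where cn: "\<forall>x\<in>D. rec_eval cn [x] (n x)"
    using assms(3) unfolding computable_on_def by blast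
  define G where "G = Pr ca (Cn ch [Cn rf_pair [Pj 2, Cn rf_pair [Pj 1, Pj 0]]])"
  have G: "rec_eval G [i, x] (rec_nat (a x) (h x) i)" for i x
  proof (induction i)
    case 0
    then show ?case unfolding G_def by (auto intro!: eval_Pr0 ca)
  next
    case (Suc i)
    have "rec_eval (Cn ch [Cn rf_pair [Pj 2, Cn rf_pair [Pj 1, Pj 0]]]) [rec_nat (a x) (h x) i, i, x]
           (h x i (rec_nat (a x) (h x) i))"
      using ch[of "c_pair x (c_pair i (rec_nat (a x) (h x) i))"]
      by (auto intro!: rec_eval_Cn1 rec_eval_Cn2 rec_eval_PjI rec_eval_rf_pair)
    then show ?case unfolding G_def
      by (simp only: old.nat.rec) (rule eval_PrS[OF Suc[unfolded G_def]])
  qed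
  show ?thesis unfolding computable_on_def
    by (rule exI[of _ "Cn G [cn, Pj 0]"]) (auto intro!: rec_eval_Cn2 rec_eval_PjI G cn[rule_format])
qed

lemma computable_Least:
  assumes "decidable_on UNIV (\<lambda>q. P (c_fst q) (c_snd q))" and "\<And>x. x \<in> D \<Longrightarrow> \<exists>i. P x i"
  shows "computable_on D (\<lambda>x. LEAST i. P x i)"
proof -
  obtain cP where cP: "\<And>q. rec_eval cP [q] (of_bool (P (c_fst q) (c_snd q)))"
    using assms(1) unfolding computable_on_def by blast
  define F where "F = Cn rf_sub [rf_const 1, Cn cP [Cn rf_pair [Pj 1, Pj 0]]]"
  have F: "rec_eval F [i, x] (1 - of_bool (P x i))" for i x
  proof -
    have "rec_eval (Cn rf_pair [Pj 1, Pj 0]) [i, x] (c_pair x i)"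
      by (rule rec_eval_Cn2[OF _ _ rec_eval_rf_pair]; rule rec_eval_PjI) auto
    then have "rec_eval (Cn cP [Cn rf_pair [Pj 1, Pj 0]]) [i, x] (of_bool (P x i))"
      using rec_eval_Cn1 cP[of "c_pair x i"] by simp
    then show ?thesis unfolding F_def by (rule rec_eval_Cn2[OF rec_eval_rf_const _ rec_eval_rf_sub])
  qed
  show ?thesis unfolding computable_on_def
  proof (intro exI[of _ "Mn F"] ballI)
    fix x assume "x \<in> D"
    then have "P x (LEAST i. P x i)" using assms(2) by (blast intro: LeastI)
    then show "rec_eval (Mn F) [x] (LEAST i. P x i)"
    proof (intro eval_Mn)
      show "rec_eval F [LEAST i. P x i, x] 0" if "P x (LEAST i. P x i)"
        using F[of "LEAST i. P x i" x] that by simp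
      show "\<forall>m<LEAST i. P x i. \<exists>r. rec_eval F [m, x] r \<and> r \<noteq> 0"
        using F not_less_Least by fastforce
    qed
  qed
qed

lemma computable_If:
  assumes "decidable_on D P" "computable_on D f" "computable_on D g"
  shows "computable_on D (\<lambda>x. if P x then f x else g x)"
proof -
  have "computable_on D (\<lambda>x. of_bool (P x) * f x + (1 - of_bool (P x)) * g x)"
    by (intro computable_add computable_mult computable_diff computable_Suc computable_const assms)
  moreover have "(\<lambda>x. of_bool (P x) * f x + (1 - of_bool (P x)) * g x) = (\<lambda>x. if P x then f x else g x)"
    by auto
  ultimately show ?thesis by simp
qed

lemma decidable_eq:
  assumes "computable_on D f" "computable_on D g"
  shows "decidable_on D (\<lambda>x. f x = g x)"
proof -
  have "computable_on D (\<lambda>x. 1 - ((f x - g x) + (g x - f x)))"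
    by (intro computable_add computable_diff computable_const assms)
  moreover have "(\<lambda>x. 1 - ((f x - g x) + (g x - f x))) = (\<lambda>x. of_bool (f x = g x))" by auto
  ultimately show ?thesis by simp
qed

lemma decidable_le:
  assumes "computable_on D f" "computable_on D g"
  shows "decidable_on D (\<lambda>x. f x \<le> g x)"
proof -
  have "computable_on D (\<lambda>x. 1 - (f x - g x))"
    by (intro computable_diff computable_const assms)
  moreover have "(\<lambda>x. 1 - (f x - g x)) = (\<lambda>x. of_bool (f x \<le> g x))" by auto
  ultimately show ?thesis by simp
qed

lemma decidable_less:
  assumes "computable_on D f" "computable_on D g"
  shows "decidable_on D (\<lambda>x. f x < g x)"
proof -
  have "computable_on D (\<lambda>x. 1 - (Suc (f x) - g x))"
    by (intro computable_diff computable_Suc computable_const assms)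
  moreover have "(\<lambda>x. 1 - (Suc (f x) - g x)) = (\<lambda>x. of_bool (f x < g x))" by auto
  ultimately show ?thesis by simp
qed

lemma decidable_not:
  assumes "decidable_on D P"
  shows "decidable_on D (\<lambda>x. \<not> P x)"
proof -
  have "computable_on D (\<lambda>x. 1 - of_bool (P x))"
    by (intro computable_diff computable_const assms)
  moreover have "(\<lambda>x. 1 - of_bool (P x)) = (\<lambda>x. of_bool (\<not> P x) :: nat)" by auto
  ultimately show ?thesis by simp
qed

lemma decidable_conj:
  assumes "decidable_on D P" "decidable_on D Q"
  shows "decidable_on D (\<lambda>x. P x \<and> Q x)"
proof -
  have "computable_on D (\<lambda>x. of_bool (P x) * of_bool (Q x))"
    by (intro computable_mult assms)
  moreover have "(\<lambda>x. of_bool (P x) * of_bool (Q x)) = (\<lambda>x. of_bool (P x \<and> Q x) :: nat)" by auto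
  ultimately show ?thesis by simp
qed

lemma decidable_disj: "decidable_on D P \<Longrightarrow> decidable_on D Q \<Longrightarrow> decidable_on D (\<lambda>x. P x \<or> Q x)"
  using decidable_not decidable_conj[of D "\<lambda>x. \<not> P x" "\<lambda>x. \<not> Q x"] by fastforce

lemma decidable_imp: "decidable_on D P \<Longrightarrow> decidable_on D Q \<Longrightarrow> decidable_on D (\<lambda>x. P x \<longrightarrow> Q x)"
  using decidable_not decidable_disj[of D "\<lambda>x. \<not> P x" Q] by fastforce

lemma computable_sum:
  assumes "computable_on UNIV (\<lambda>q. f (c_fst q) (c_snd q))" "computable_on D n"
  shows "computable_on D (\<lambda>x. \<Sum>i<n x. f x i)"
proof -
  have "rec_nat 0 (\<lambda>i acc. acc + f x i) m = (\<Sum>i<m. f x i)" for x m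
    by (induction m) auto
  moreover have "computable_on D (\<lambda>x. rec_nat 0 (\<lambda>i acc. acc + f x i) (n x))"
    by (intro computable_rec_nat computable_const computable_add computable_c_snd computable_c_fst
        computable_id computable_binary[OF assms(1)] assms(2))
  ultimately show ?thesis by simp
qed

lemma computable_prod:
  assumes "computable_on UNIV (\<lambda>q. f (c_fst q) (c_snd q))" "computable_on D n"
  shows "computable_on D (\<lambda>x. \<Prod>i<n x. f x i)"
proof -
  have "rec_nat 1 (\<lambda>i acc. acc * f x i) m = (\<Prod>i<m. f x i)" for x m
    by (induction m) auto
  moreover have "computable_on D (\<lambda>x. rec_nat 1 (\<lambda>i acc. acc * f x i) (n x))"
    by (intro computable_rec_nat computable_const computable_mult computable_c_snd computable_c_fst
        computable_id computable_binary[OF assms(1)] assms(2))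
  ultimately show ?thesis by simp
qed

lemma decidable_bex_less:
  assumes "decidable_on UNIV (\<lambda>q. P (c_fst q) (c_snd q))" "computable_on D n"
  shows "decidable_on D (\<lambda>x. \<exists>i<n x. P x i)"
proof -
  have "decidable_on D (\<lambda>x. (\<Sum>i<n x. of_bool (P x i)) \<noteq> (0::nat))"
    by (intro decidable_not decidable_eq computable_sum computable_const assms)
  moreover have "((\<Sum>i<m. of_bool (P x i)) \<noteq> (0::nat)) = (\<exists>i<m. P x i)" for x m
    by auto
  ultimately show ?thesis by simp
qed

lemma decidable_ball_less:
  assumes "decidable_on UNIV (\<lambda>q. P (c_fst q) (c_snd q))" "computable_on D n"
  shows "decidable_on D (\<lambda>x. \<forall>i<n x. P x i)"
proof -
  have "decidable_on D (\<lambda>x. \<not> (\<exists>i<n x. \<not> P x i))"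
    using assms by (intro decidable_not decidable_bex_less) auto
  then show ?thesis by simp
qed

lemma computable_max:
  "computable_on D f \<Longrightarrow> computable_on D g \<Longrightarrow> computable_on D (\<lambda>x. max (f x) (g x))"
  unfolding max_def by (intro computable_If decidable_le)

section \<open>Codes of lists\<close>

lemma enc_list_Cons [simp]: "enc_list (x # xs) = Suc (c_pair x (enc_list xs))"
  by (simp add: c_pair_def)

declare enc_list.simps(2) [simp del]

definition code_hd :: "nat \<Rightarrow> nat" where "code_hd c = c_fst (c - 1)"
definition code_tl :: "nat \<Rightarrow> nat" where "code_tl c = c_snd (c - 1)"
definition code_drop :: "nat \<Rightarrow> nat \<Rightarrow> nat" where "code_drop i c = rec_nat c (\<lambda>_. code_tl) i"
definition code_nth :: "nat \<Rightarrow> nat \<Rightarrow> nat" where "code_nth c i = code_hd (code_drop i c)"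
text \<open>A list is shorter than its code, so its length is the number of nonempty suffixes among the
  first \<open>c\<close> ones.\<close>

definition code_length :: "nat \<Rightarrow> nat" where "code_length c = (\<Sum>j<c. of_bool (code_drop j c \<noteq> 0))"

definition code_member :: "nat \<Rightarrow> nat \<Rightarrow> bool" where
  "code_member c v \<longleftrightarrow> (\<exists>j<code_length c. code_nth c j = v)"

definition list_code_bound :: "nat \<Rightarrow> nat \<Rightarrow> nat" where
  "list_code_bound n m = rec_nat 0 (\<lambda>_ b. Suc (c_pair m b)) n"

lemma computable_code_hd: "computable_on D f \<Longrightarrow> computable_on D (\<lambda>x. code_hd (f x))"
  unfolding code_hd_def by (intro computable_c_fst computable_diff computable_const)

lemma computable_code_tl: "computable_on D f \<Longrightarrow> computable_on D (\<lambda>x. code_tl (f x))"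
  unfolding code_tl_def by (intro computable_c_snd computable_diff computable_const)

lemma computable_code_drop:
  assumes "computable_on D f" "computable_on D g"
  shows "computable_on D (\<lambda>x. code_drop (f x) (g x))"
proof -
  have "computable_on UNIV (\<lambda>q. rec_nat (c_snd q) (\<lambda>_. code_tl) (c_fst q))"
    by (intro computable_rec_nat computable_code_tl computable_c_snd computable_c_fst computable_id)
  then show ?thesis
    unfolding code_drop_def by (rule computable_binary[OF _ assms])
qed

lemma computable_code_nth:
  "computable_on D f \<Longrightarrow> computable_on D g \<Longrightarrow> computable_on D (\<lambda>x. code_nth (f x) (g x))"
  unfolding code_nth_def by (intro computable_code_hd computable_code_drop)

lemma computable_code_length: "computable_on D f \<Longrightarrow> computable_on D (\<lambda>x. code_length (f x))"
proof -
  assume f: "computable_on D f"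
  have "computable_on UNIV code_length"
    unfolding code_length_def
    by (intro computable_sum decidable_not decidable_eq computable_code_drop computable_c_fst
        computable_c_snd computable_id computable_const)
  then show ?thesis using computable_comp[OF _ f] by blast
qed

lemma decidable_code_member:
  assumes "computable_on D f" "computable_on D g"
  shows "decidable_on D (\<lambda>x. code_member (f x) (g x))"
proof -
  have "decidable_on UNIV (\<lambda>q. code_member (c_fst q) (c_snd q))"
    unfolding code_member_def
    by (intro decidable_bex_less decidable_eq computable_code_nth computable_code_length
        computable_c_fst computable_c_snd computable_id)
  then show ?thesis by (rule computable_binary[OF _ assms])
qed

lemma computable_list_code_bound:
  assumes "computable_on D f" "computable_on D g"
  shows "computable_on D (\<lambda>x. list_code_bound (f x) (g x))"
proof -
  have "computable_on UNIV (\<lambda>q. rec_nat 0 (\<lambda>_ b. Suc (c_pair (c_snd q) b)) (c_fst q))"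
    by (intro computable_rec_nat computable_Suc computable_c_pair computable_c_snd computable_c_fst
        computable_id computable_const)
  then show ?thesis
    unfolding list_code_bound_def by (rule computable_binary[OF _ assms])
qed

lemmas computable_intros =
  computable_const computable_id computable_add computable_mult computable_diff computable_c_pair
  computable_Suc computable_c_fst computable_c_snd computable_rec_nat computable_If decidable_eq
  decidable_le decidable_less decidable_not decidable_conj decidable_disj decidable_imp
  computable_sum computable_prod decidable_bex_less decidable_ball_less computable_max
  computable_code_hd computable_code_tl
  computable_code_drop computable_code_nth computable_code_length decidable_code_member
  computable_list_code_bound

lemma code_hd_Suc [simp]: "code_hd (Suc q) = c_fst q"
  by (simp add: code_hd_def)

lemma code_tl_Suc [simp]: "code_tl (Suc q) = c_snd q"
  by (simp add: code_tl_def)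

lemma code_tl_enc_list [simp]: "code_tl (enc_list xs) = enc_list (tl xs)"
  by (cases xs) (auto simp: code_tl_def)

lemma code_drop_enc_list [simp]: "code_drop i (enc_list xs) = enc_list (drop i xs)"
  by (induction i) (auto simp: code_drop_def drop_Suc drop_tl)

lemma enc_list_eq_0_iff [simp]: "enc_list xs = 0 \<longleftrightarrow> xs = []"
  by (cases xs) auto

lemma code_nth_enc_list [simp]: "i < length xs \<Longrightarrow> code_nth (enc_list xs) i = xs ! i"
  by (simp add: code_nth_def Cons_nth_drop_Suc[symmetric])

lemma length_le_enc_list: "length xs \<le> enc_list xs"
proof (induction xs)
  case (Cons x xs)
  then show ?case using c_pair_ge2[of "enc_list xs" x] by simp
qed simp

lemma enc_list_gt_member: "x \<in> set xs \<Longrightarrow> x < enc_list xs"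
proof (induction xs)
  case (Cons y ys)
  then show ?case using c_pair_ge1[of y "enc_list ys"] c_pair_ge2[of "enc_list ys" y] by fastforce
qed simp

lemma code_length_enc_list [simp]: "code_length (enc_list xs) = length xs"
proof -
  have "code_length (enc_list xs) = (\<Sum>j<enc_list xs. of_bool (j < length xs))"
    unfolding code_length_def by (intro sum.cong) auto
  also have "\<dots> = card {j. j < enc_list xs \<and> j < length xs}"
    by (simp add: sum.If_cases Int_def)
  also have "{j. j < enc_list xs \<and> j < length xs} = {..<length xs}"
    using length_le_enc_list[of xs] by auto
  finally show ?thesis by simp
qed

lemma code_member_enc_list [simp]: "code_member (enc_list xs) v \<longleftrightarrow> v \<in> set xs"
  unfolding code_member_def by (auto simp: in_set_conv_nth)

lemma enc_list_inject [simp]: "enc_list xs = enc_list ys \<longleftrightarrow> xs = ys"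
proof (induction xs arbitrary: ys)
  case Nil
  then show ?case by (cases ys) auto
next
  case (Cons x xs)
  then show ?case by (cases ys) (auto simp: c_pair_def)
qed

lemma code_nth_Suc_c_pair_0 [simp]: "code_nth (Suc (c_pair a b)) 0 = a"
  by (simp add: code_nth_def code_drop_def)

lemma code_nth_Suc_c_pair_Suc [simp]: "code_nth (Suc (c_pair a b)) (Suc i) = code_nth b i"
proof -
  have "code_drop (Suc i) c = code_drop i (code_tl c)" for c
    by (induction i) (auto simp: code_drop_def)
  then show ?thesis by (simp add: code_nth_def)
qed

function dec_list :: "nat \<Rightarrow> nat list" where
  "dec_list c = (if c = 0 then [] else code_hd c # dec_list (code_tl c))"
  by auto
termination
proof (relation "measure id")
  show "c \<noteq> 0 \<Longrightarrow> (code_tl c, c) \<in> measure id" for c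
    using c_pair_ge2[of "c_snd (c - 1)" "c_fst (c - 1)"] by (simp add: code_tl_def)
qed auto

declare dec_list.simps [simp del]

lemma enc_list_dec_list [simp]: "enc_list (dec_list c) = c"
proof (induction c rule: dec_list.induct)
  case (1 c)
  show ?case
  proof (cases "c = 0")
    case True
    then show ?thesis by (simp add: dec_list.simps)
  next
    case False
    then have "enc_list (dec_list c) = Suc (c_pair (code_hd c) (code_tl c))"
      using 1 by (simp add: dec_list.simps[of c])
    also have "\<dots> = c" using False by (simp add: code_hd_def code_tl_def)
    finally show ?thesis .
  qed
qed

definition dec_words :: "nat \<Rightarrow> nat list list" where
  "dec_words c = map dec_list (dec_list c)"

lemma enc_list_dec_words [simp]: "enc_list (map enc_list (dec_words c)) = c"
  by (simp add: dec_words_def comp_def)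

lemma enc_list_le_list_code_bound:
  "length xs \<le> n \<Longrightarrow> \<forall>x\<in>set xs. x \<le> m \<Longrightarrow> enc_list xs \<le> list_code_bound n m"
proof (induction xs arbitrary: n)
  case (Cons x xs)
  then obtain n' where n: "n = Suc n'" by (cases n) auto
  have "enc_list xs \<le> list_code_bound n' m" using Cons n by auto
  then show ?case using Cons.prems n by (auto simp: list_code_bound_def intro!: c_pair_mono)
qed simp

definition run :: "(nat \<times> 'l \<times> nat) list \<Rightarrow> nat list \<Rightarrow> 'l list \<Rightarrow> bool" where
  "run tr r z \<longleftrightarrow> length r = Suc (length z) \<and> (\<forall>i<length z. (r ! i, z ! i, r ! Suc i) \<in> set tr)"

definition accepting_run :: "'l nfa \<Rightarrow> nat list \<Rightarrow> 'l list \<Rightarrow> bool" where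
  "accepting_run N r z \<longleftrightarrow> (case N of (tr, ini, fin) \<Rightarrow>
     run tr r z \<and> r ! 0 \<in> set ini \<and> r ! length z \<in> set fin)"

definition run_states :: "'l nfa \<Rightarrow> nat set" where
  "run_states N = (case N of (tr, ini, fin) \<Rightarrow> set ini \<union> (\<lambda>(p, x, q). q) ` set tr)"

lemma run_Nil: "run tr r [] \<longleftrightarrow> r = [r ! 0]"
  by (cases r) (auto simp: run_def)

lemma run_Cons: "run tr (p # r) (x # xs) \<longleftrightarrow> (p, x, r ! 0) \<in> set tr \<and> run tr r xs"
  by (auto simp: run_def All_less_Suc2)

lemma reach_iff_run: "reach tr p z q \<longleftrightarrow> (\<exists>r. run tr r z \<and> r ! 0 = p \<and> r ! length z = q)"
proof (induction z arbitrary: p)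
  case Nil
  show ?case
    by (auto simp: run_Nil intro!: exI[of _ "[p]"])
next
  case (Cons x xs)
  have "(\<exists>r. run tr r (x # xs) \<and> r ! 0 = p \<and> r ! length (x # xs) = q) \<longleftrightarrow>
    (\<exists>r. run tr (p # r) (x # xs) \<and> r ! length xs = q)"
    by (metis length_Cons nth_Cons_0 nth_Cons_Suc run_def list.exhaust list.size(3) nat.distinct(1))
  then show ?case
    using Cons by (auto simp: run_Cons)
qed

lemma lang_iff_accepting_run: "z \<in> lang N \<longleftrightarrow> (\<exists>r. accepting_run N r z)"
  unfolding lang_def accepting_run_def reach_iff_run by (cases N) auto

lemma reach_append: "reach tr p (a @ b) q \<longleftrightarrow> (\<exists>m. reach tr p a m \<and> reach tr m b q)"
  by (induction a arbitrary: p) auto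

lemma reach_take: "run tr r z \<Longrightarrow> b \<le> length z \<Longrightarrow> reach tr (r ! 0) (take b z) (r ! b)"
  unfolding reach_iff_run by (intro exI[of _ "take (Suc b) r"]) (auto simp: run_def)

lemma reach_drop: "run tr r z \<Longrightarrow> a \<le> length z \<Longrightarrow> reach tr (r ! a) (drop a z) (r ! length z)"
  unfolding reach_iff_run by (intro exI[of _ "drop a r"]) (auto simp: run_def add.commute)

lemma accepting_run_in_run_states:
  assumes "accepting_run N r z" "k < length r"
  shows "r ! k \<in> run_states N"
proof (cases k)
  case 0
  then show ?thesis using assms by (cases N) (auto simp: accepting_run_def run_states_def)
next
  case (Suc j)
  then show ?thesis using assms by (cases N) (force simp: accepting_run_def run_states_def run_def)
qed

lemma reach_letters: "reach tr p z q \<Longrightarrow> set z \<subseteq> (\<lambda>(p, x, q). x) ` set tr"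
  by (induction z arbitrary: p) (auto, force)

lemma lang_letters: "u \<in> lang N \<Longrightarrow> set u \<subseteq> nfa_letters N"
  unfolding lang_def nfa_letters_def by (cases N) (auto dest: reach_letters)

definition padded_nth :: "'a list \<Rightarrow> nat \<Rightarrow> 'a option" where
  "padded_nth u k = (if k < length u then Some (u ! k) else None)"

lemma pad_conv_conv_padded_nth:
  "pad_conv u v = map (\<lambda>k. (padded_nth u k, padded_nth v k)) [0..<max (length u) (length v)]"
  by (rule nth_equalityI) (auto simp: pad_conv_def padded_nth_def nth_append)

lemma length_pad_conv [simp]: "length (pad_conv u v) = max (length u) (length v)"
  by (simp add: pad_conv_conv_padded_nth)

lemma nth_pad_conv: "k < max (length u) (length v) \<Longrightarrow> pad_conv u v ! k = (padded_nth u k, padded_nth v k)"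
  by (simp add: pad_conv_conv_padded_nth)

lemma pad_conv_inject: "pad_conv u v = pad_conv u' v' \<Longrightarrow> u = u' \<and> v = v'"
proof -
  have unpad: "map the (filter (\<lambda>x. x \<noteq> None) (map Some u @ replicate a None)) = u" for u :: "nat list" and a
    by (induction u) (auto simp: filter_replicate)
  have "map fst (pad_conv u v) = map Some u @ replicate (length v - length u) None"
    and "map snd (pad_conv u v) = map Some v @ replicate (length u - length v) None" for u v
    unfolding pad_conv_def by (simp_all add: map_fst_zip map_snd_zip)
  then show "pad_conv u v = pad_conv u' v' \<Longrightarrow> u = u' \<and> v = v'"
    by (metis unpad)
qed

text \<open>Cutting out the same positions from all words of a chain is the surgery of the pumping
  argument below.\<close>

definition cut_out :: "nat \<Rightarrow> nat \<Rightarrow> 'a list \<Rightarrow> 'a list" where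
  "cut_out j j' u = take j u @ drop j' u"

lemma length_cut_out: "j \<le> j' \<Longrightarrow> length (cut_out j j' u) = min j (length u) + (length u - j')"
  by (simp add: cut_out_def)

lemma cut_out_short: "length u \<le> j \<Longrightarrow> j \<le> j' \<Longrightarrow> cut_out j j' u = u"
  by (simp add: cut_out_def)

lemma nth_cut_out:
  "j \<le> j' \<Longrightarrow> k < length (cut_out j j' u) \<Longrightarrow>
    cut_out j j' u ! k = (if k < j then u ! k else u ! (k + (j' - j)))"
  by (auto simp: cut_out_def nth_append min_def split: if_splits) (simp add: add.commute)

lemma padded_nth_cut_out:
  "j \<le> j' \<Longrightarrow>
    padded_nth (cut_out j j' u) k = (if k < j then padded_nth u k else padded_nth u (k + (j' - j)))"
  by (auto simp: padded_nth_def length_cut_out nth_cut_out)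

lemma cut_out_pad_conv:
  assumes "j \<le> j'"
  shows "pad_conv (cut_out j j' u) (cut_out j j' v) = cut_out j j' (pad_conv u v)"
proof (rule nth_equalityI)
  have max_cut: "max (min j a + (a - j')) (min j b + (b - j')) = min j (max a b) + (max a b - j')"
    for a b :: nat
    by (auto simp: max_def min_def)
  then show len: "length (pad_conv (cut_out j j' u) (cut_out j j' v)) = length (cut_out j j' (pad_conv u v))"
    using assms by (simp add: length_cut_out)
  fix k assume k: "k < length (pad_conv (cut_out j j' u) (cut_out j j' v))"
  then have "k < length (cut_out j j' (pad_conv u v))"
    using len by simp
  then have "k < j \<Longrightarrow> k < max (length u) (length v)" "\<not> k < j \<Longrightarrow> k + (j' - j) < max (length u) (length v)"
    using assms by (simp_all add: length_cut_out)
  then show "pad_conv (cut_out j j' u) (cut_out j j' v) ! k = cut_out j j' (pad_conv u v) ! k"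
    using k len assms by (auto simp: nth_pad_conv padded_nth_cut_out nth_cut_out)
qed

section \<open>Deciding acceptance on codes\<close>

definition nfa_code_trans :: "nat \<Rightarrow> nat" where "nfa_code_trans N = code_nth N 0"
definition nfa_code_init :: "nat \<Rightarrow> nat" where "nfa_code_init N = code_nth N 1"
definition nfa_code_final :: "nat \<Rightarrow> nat" where "nfa_code_final N = code_nth N 2"

text \<open>The states of an
  automaton are bounded by its code, so the search for an accepting run is bounded.\<close>

definition accepts_code :: "nat \<Rightarrow> nat \<Rightarrow> (nat \<Rightarrow> nat) \<Rightarrow> bool" where
  "accepts_code N n letter \<longleftrightarrow> (\<exists>r<Suc (list_code_bound (Suc n) N).
     code_length r = Suc n \<and> code_member (nfa_code_init N) (code_nth r 0) \<and>
     code_member (nfa_code_final N) (code_nth r n) \<and>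
     (\<forall>i<n. code_member (nfa_code_trans N) (enc_list [code_nth r i, letter i, code_nth r (Suc i)])))"

definition accepts_word_code :: "nat \<Rightarrow> nat \<Rightarrow> bool" where
  "accepts_word_code N u \<longleftrightarrow> accepts_code N (code_length u) (code_nth u)"

definition padded_letter_code :: "nat \<Rightarrow> nat \<Rightarrow> nat" where
  "padded_letter_code u i = (if i < code_length u then Suc (code_nth u i) else 0)"

definition accepts_pair_code :: "nat \<Rightarrow> nat \<Rightarrow> nat \<Rightarrow> bool" where
  "accepts_pair_code N u v \<longleftrightarrow> accepts_code N (max (code_length u) (code_length v))
     (\<lambda>i. c_pair (padded_letter_code u i) (padded_letter_code v i))"

lemma decidable_accepts_word_code:
  assumes "computable_on D f" "computable_on D g"
  shows "decidable_on D (\<lambda>x. accepts_word_code (f x) (g x))"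
proof -
  have "decidable_on UNIV (\<lambda>q. accepts_word_code (c_fst q) (c_snd q))"
    unfolding accepts_word_code_def accepts_code_def nfa_code_trans_def nfa_code_init_def
      nfa_code_final_def enc_list_Cons enc_list.simps(1)
    by (intro computable_intros)
  then show ?thesis by (rule computable_binary[OF _ assms])
qed

lemma decidable_accepts_pair_code:
  assumes "computable_on D f" "computable_on D g" "computable_on D h"
  shows "decidable_on D (\<lambda>x. accepts_pair_code (f x) (g x) (h x))"
proof -
  have "decidable_on UNIV (\<lambda>q. accepts_pair_code (c_fst q) (c_fst (c_snd q)) (c_snd (c_snd q)))"
    unfolding accepts_pair_code_def accepts_code_def padded_letter_code_def nfa_code_trans_def
      nfa_code_init_def nfa_code_final_def enc_list_Cons enc_list.simps(1)
    by (intro computable_intros)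
  from computable_comp[OF this computable_c_pair[OF assms(1) computable_c_pair[OF assms(2,3)]]]
  show ?thesis by simp
qed

lemma enc_nfa_Pair:
  "enc_nfa e (tr, ini, fin) =
    enc_list [enc_list (map (\<lambda>(p, x, q). enc_list [p, e x, q]) tr), enc_list ini, enc_list fin]"
  by (simp add: enc_nfa_def)

lemma nfa_code_parts [simp]:
  "nfa_code_trans (enc_nfa e (tr, ini, fin)) = enc_list (map (\<lambda>(p, x, q). enc_list [p, e x, q]) tr)"
  "nfa_code_init (enc_nfa e (tr, ini, fin)) = enc_list ini"
  "nfa_code_final (enc_nfa e (tr, ini, fin)) = enc_list fin"
  unfolding nfa_code_trans_def nfa_code_init_def nfa_code_final_def enc_nfa_Pair
  by (subst code_nth_enc_list; simp)+

lemma transition_code_member: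
  assumes "inj e"
  shows "enc_list [p, e x, q] \<in> (\<lambda>(p, x, q). enc_list [p, e x, q]) ` set tr \<longleftrightarrow> (p, x, q) \<in> set tr"
  using assms by (force simp del: enc_list_Cons simp: inj_eq)

lemma run_states_le_enc_nfa:
  assumes "q \<in> run_states N"
  shows "q \<le> enc_nfa e N"
proof -
  obtain tr ini fin where N: "N = (tr, ini, fin)" by (cases N)
  let ?trc = "enc_list (map (\<lambda>(p, x, q). enc_list [p, e x, q]) tr)"
  have parts: "enc_list ini < enc_nfa e N" "?trc < enc_nfa e N"
    unfolding N enc_nfa_Pair by (intro enc_list_gt_member; simp)+
  have "q \<in> set ini \<union> (\<lambda>(p, x, q). q) ` set tr"
    using assms by (simp add: N run_states_def)
  then show ?thesis
  proof (elim UnE imageE)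
    assume "q \<in> set ini"
    then show ?thesis using enc_list_gt_member[of q ini] parts(1) N by simp
  next
    fix t assume "t \<in> set tr" "q = (\<lambda>(p, x, q). q) t"
    then obtain p x where t: "(p, x, q) \<in> set tr" by (metis case_prod_conv prod_cases3)
    have "q < enc_list [p, e x, q]" by (intro enc_list_gt_member) simp
    also have "\<dots> < ?trc" using t by (intro enc_list_gt_member) force
    finally show ?thesis using parts(2) N by simp
  qed
qed

lemma accepts_code_iff_lang:
  assumes "inj e" and letter: "\<And>i. i < length z \<Longrightarrow> letter i = e (z ! i)"
  shows "accepts_code (enc_nfa e N) (length z) letter \<longleftrightarrow> z \<in> lang N"
proof -
  obtain tr ini fin where N: "N = (tr, ini, fin)" by (cases N)
  let ?B = "list_code_bound (Suc (length z)) (enc_nfa e N)"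
  have code_run: "(code_length (enc_list r) = Suc (length z) \<and>
      code_member (nfa_code_init (enc_nfa e N)) (code_nth (enc_list r) 0) \<and>
      code_member (nfa_code_final (enc_nfa e N)) (code_nth (enc_list r) (length z)) \<and>
      (\<forall>i<length z. code_member (nfa_code_trans (enc_nfa e N))
         (enc_list [code_nth (enc_list r) i, letter i, code_nth (enc_list r) (Suc i)])))
    \<longleftrightarrow> accepting_run N r z" for r
    by (cases "length r = Suc (length z)")
      (auto simp: N accepting_run_def run_def letter transition_code_member[OF assms(1)]
        simp del: enc_list_Cons)
  have "accepts_code (enc_nfa e N) (length z) letter \<longleftrightarrow> (\<exists>r. enc_list r < Suc ?B \<and> accepting_run N r z)"
    unfolding accepts_code_def using code_run by (metis enc_list_dec_list)
  also have "\<dots> \<longleftrightarrow> (\<exists>r. accepting_run N r z)"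
  proof -
    have "enc_list r \<le> ?B" if "accepting_run N r z" for r
    proof (rule enc_list_le_list_code_bound)
      show "length r \<le> Suc (length z)"
        using that by (simp add: N accepting_run_def run_def)
      show "\<forall>q\<in>set r. q \<le> enc_nfa e N"
        using accepting_run_in_run_states[OF that] run_states_le_enc_nfa
        by (metis in_set_conv_nth)
    qed
    then show ?thesis by (auto simp: less_Suc_eq_le)
  qed
  finally show ?thesis by (simp add: lang_iff_accepting_run)
qed

lemma accepts_word_code_iff: "accepts_word_code (enc_nfa id N) (enc_list u) \<longleftrightarrow> u \<in> lang N"
  using accepts_code_iff_lang[of id u "code_nth (enc_list u)" N]
  unfolding accepts_word_code_def by simp

lemma inj_enc_pair_letter: "inj enc_pair_letter"
proof -
  have "inj enc_opt"
    unfolding inj_def enc_opt_def by (auto split: option.splits)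
  then show ?thesis
    unfolding inj_def enc_pair_letter_def by (auto simp: inj_eq prod_eq_iff)
qed

lemma accepts_pair_code_iff:
  "accepts_pair_code (enc_nfa enc_pair_letter N) (enc_list u) (enc_list v) \<longleftrightarrow> pad_conv u v \<in> lang N"
proof -
  have "padded_letter_code (enc_list u) i = enc_opt (padded_nth u i)" for u i
    by (simp add: padded_letter_code_def padded_nth_def enc_opt_def)
  then show ?thesis
    unfolding accepts_pair_code_def
    using accepts_code_iff_lang[OF inj_enc_pair_letter, of "pad_conv u v"]
    by (simp add: nth_pad_conv enc_pair_letter_def c_pair_def)
qed

section \<open>Pumping down chains of synchronous automata\<close>

definition chain :: "nat \<Rightarrow> (nat \<Rightarrow> (nat option \<times> nat option) nfa) \<Rightarrow> nat list list \<Rightarrow> bool" where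
  "chain n NF xs \<longleftrightarrow> length xs = Suc n \<and> (\<forall>i<n. pad_conv (xs ! i) (xs ! Suc i) \<in> lang (NF i))"

lemma pigeonhole_PiE:
  fixes n :: nat and S :: "nat \<Rightarrow> nat"
  assumes "\<And>p. V p \<in> PiE {..<n} (\<lambda>i. {0..S i})"
  shows "\<exists>j j'. a \<le> j \<and> j < j' \<and> j' \<le> a + (\<Prod>i<n. Suc (S i)) \<and> V j = V j'"
proof -
  let ?P = "\<Prod>i<n. Suc (S i)"
  have "\<not> inj_on V {a..a + ?P}"
  proof
    assume "inj_on V {a..a + ?P}"
    then have "card {a..a + ?P} \<le> card (PiE {..<n} (\<lambda>i. {0..S i}))"
      using assms by (intro card_inj_on_le) (auto intro!: finite_PiE)
    then show False by (simp add: card_PiE)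
  qed
  then show ?thesis
    unfolding inj_on_def by (metis atLeastAtMost_iff linorder_neqE_nat)
qed

lemma accepting_run_cut_out:
  assumes run: "accepting_run N r z" and "j \<le> j'"
    and same_state: "r ! min j (length z) = r ! min j' (length z)"
  shows "cut_out j j' z \<in> lang N"
proof -
  obtain tr ini fin where N: "N = (tr, ini, fin)" by (cases N)
  have "run tr r z" "r ! 0 \<in> set ini" "r ! length z \<in> set fin"
    using run by (auto simp: N accepting_run_def)
  moreover have "take j z = take (min j (length z)) z" "drop j' z = drop (min j' (length z)) z"
    by (simp_all add: min_def)
  ultimately have "reach tr (r ! 0) (take j z) (r ! min j (length z))"
    "reach tr (r ! min j' (length z)) (drop j' z) (r ! length z)"
    by (metis reach_take min.cobounded2, metis reach_drop min.cobounded2)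
  then show ?thesis
    using \<open>r ! 0 \<in> set ini\<close> \<open>r ! length z \<in> set fin\<close> same_state
    unfolding lang_def cut_out_def N by (auto simp: reach_append)
qed

lemma chain_cut_out:
  assumes "chain n NF xs" and "j \<le> j'"
    and runs: "\<And>i. i < n \<Longrightarrow> accepting_run (NF i) (R i) (pad_conv (xs ! i) (xs ! Suc i))"
    and same_states: "\<And>i. i < n \<Longrightarrow>
      R i ! min j (length (pad_conv (xs ! i) (xs ! Suc i))) =
      R i ! min j' (length (pad_conv (xs ! i) (xs ! Suc i)))"
  shows "chain n NF (map (cut_out j j') xs)"
  using assms accepting_run_cut_out[OF runs \<open>j \<le> j'\<close> same_states]
  by (auto simp: chain_def cut_out_pad_conv)

lemma sum_list_length_cut_out_less:
  assumes "l < length xs" "j < j'" "j' \<le> length (xs ! l)"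
  shows "(\<Sum>y\<leftarrow>map (cut_out j j') xs. length y) < (\<Sum>x\<leftarrow>xs. length x)"
proof -
  have "length (cut_out j j' x) \<le> length x" for x
    using assms(2) by (simp add: length_cut_out)
  moreover have "length (cut_out j j' (xs ! l)) < length (xs ! l)"
    using assms(2,3) by (simp add: length_cut_out)
  ultimately show ?thesis
    using assms(1) unfolding sum_list_sum_nth by (auto intro!: sum_strict_mono_ex1)
qed

lemma chain_pump_down_step:
  assumes chain: "chain n NF xs" and last: "xs ! n = e"
    and states: "\<And>i q. i < n \<Longrightarrow> q \<in> run_states (NF i) \<Longrightarrow> q \<le> S i"
    and long: "l < Suc n" "length (xs ! l) > length e + (\<Prod>i<n. Suc (S i))"
  shows "\<exists>ys. chain n NF ys \<and> ys ! n = e \<and> (\<Sum>y\<leftarrow>ys. length y) < (\<Sum>x\<leftarrow>xs. length x)"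
proof -
  define pc where "pc i = pad_conv (xs ! i) (xs ! Suc i)" for i
  have "\<forall>i\<in>{..<n}. \<exists>r. accepting_run (NF i) r (pc i)"
    using chain by (auto simp: chain_def pc_def lang_iff_accepting_run)
  then obtain R where R: "\<And>i. i < n \<Longrightarrow> accepting_run (NF i) (R i) (pc i)"
    by (metis bchoice lessThan_iff)
  define V where "V p = restrict (\<lambda>i. R i ! min p (length (pc i))) {..<n}" for p
  have "V p \<in> PiE {..<n} (\<lambda>i. {0..S i})" for p
  proof -
    have "length (R i) = Suc (length (pc i))" if "i < n" for i
      using R[OF that] by (cases "NF i") (simp add: accepting_run_def run_def)
    then show ?thesis
      unfolding V_def using accepting_run_in_run_states[OF R] states by auto
  qed
  then obtain j j' where jj: "length e \<le> j" "j < j'" "j' \<le> length e + (\<Prod>i<n. Suc (S i))" "V j = V j'"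
    using pigeonhole_PiE by blast
  have "R i ! min j (length (pc i)) = R i ! min j' (length (pc i))" if "i < n" for i
    using fun_cong[OF jj(4), of i] that by (simp add: V_def)
  then have "chain n NF (map (cut_out j j') xs)"
    using chain jj(2) R unfolding pc_def by (intro chain_cut_out) auto
  moreover have "map (cut_out j j') xs ! n = e"
    using chain jj last by (simp add: chain_def cut_out_short)
  moreover have "(\<Sum>y\<leftarrow>map (cut_out j j') xs. length y) < (\<Sum>x\<leftarrow>xs. length x)"
    using chain long jj by (intro sum_list_length_cut_out_less[of l]) (auto simp: chain_def)
  ultimately show ?thesis by blast
qed

lemma chain_pump_down:
  assumes "chain n NF xs" "xs ! n = e" "\<And>i q. i < n \<Longrightarrow> q \<in> run_states (NF i) \<Longrightarrow> q \<le> S i"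
  shows "\<exists>ys. chain n NF ys \<and> ys ! n = e \<and> (\<forall>i<Suc n. length (ys ! i) \<le> length e + (\<Prod>i<n. Suc (S i)))"
  using assms(1,2)
proof (induction "\<Sum>x\<leftarrow>xs. length x" arbitrary: xs rule: less_induct)
  case less
  show ?case
  proof (cases "\<forall>i<Suc n. length (xs ! i) \<le> length e + (\<Prod>i<n. Suc (S i))")
    case False
    then obtain l where "l < Suc n" "length (xs ! l) > length e + (\<Prod>i<n. Suc (S i))"
      by (auto simp: not_le)
    then obtain ys where "chain n NF ys" "ys ! n = e" "(\<Sum>y\<leftarrow>ys. length y) < (\<Sum>x\<leftarrow>xs. length x)"
      using chain_pump_down_step[where S=S and l=l, OF less.prems assms(3)] by blast
    then show ?thesis using less.hyps by blast
  qed (use less in blast)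
qed

section \<open>The decision procedure\<close>

definition input_k :: "nat \<Rightarrow> nat" where "input_k x = code_nth x 0"
definition input_NL :: "nat \<Rightarrow> nat" where "input_NL x = code_nth x 1"
definition input_Neq :: "nat \<Rightarrow> nat" where "input_Neq x = code_nth x 2"
definition input_Na :: "nat \<Rightarrow> nat" where "input_Na x = code_nth x 3"
definition input_io :: "nat \<Rightarrow> nat" where "input_io x = code_nth x 4"
definition input_w :: "nat \<Rightarrow> nat" where "input_w x = code_nth x 5"

text \<open>If the empty word lies in \<open>L\<close> it represents \<open>1\<close>. Otherwise every element is represented by a
  nonempty word, so a word \<open>u \<in> L\<close> with \<open>\<sigma> (u a) = \<sigma> (\<iota> a)\<close> for all letters \<open>a\<close> represents a left
  identity on all of \<open>M\<close>, i.e. \<open>1\<close>.\<close>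

definition is_identity_code :: "nat \<Rightarrow> nat \<Rightarrow> bool" where
  "is_identity_code x u \<longleftrightarrow> accepts_word_code (input_NL x) u \<and>
     (u = 0 \<or> (\<not> accepts_word_code (input_NL x) 0 \<and>
       (\<forall>a<input_k x. accepts_pair_code (code_nth (input_Na x) a) u (code_nth (input_io x) a))))"

definition identity_code :: "nat \<Rightarrow> nat" where
  "identity_code x = (LEAST u. is_identity_code x u)"

definition chain_code :: "nat \<Rightarrow> nat \<Rightarrow> (nat \<Rightarrow> nat) \<Rightarrow> nat \<Rightarrow> bool" where
  "chain_code x n letter c \<longleftrightarrow> code_length c = Suc n \<and>
     (\<forall>i<n. accepts_pair_code (code_nth (input_Na x) (letter i)) (code_nth c i) (code_nth c (Suc i)))"

definition code_nth_append :: "nat \<Rightarrow> nat \<Rightarrow> nat \<Rightarrow> nat" where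
  "code_nth_append u v i = (if i < code_length u then code_nth u i else code_nth v (i - code_length u))"

text \<open>A chain \<open>x\<^sub>0, \<dots>, x\<^sub>n = e\<close> along the input word \<open>w\<close> exhibits \<open>\<sigma> x\<^sub>0\<close> as a left inverse
  of \<open>\<sigma> w\<close>; a chain \<open>e = y\<^sub>0, \<dots>\<close> along \<open>w x\<^sub>0\<close> then ends in a representative of
  \<open>\<sigma> w \<otimes> \<sigma> x\<^sub>0\<close>.\<close>

definition is_left_inverse_chain_code :: "nat \<Rightarrow> nat \<Rightarrow> nat \<Rightarrow> bool" where
  "is_left_inverse_chain_code x e c \<longleftrightarrow>
     chain_code x (code_length (input_w x)) (code_nth (input_w x)) c \<and>
     code_nth c (code_length (input_w x)) = e"

definition is_product_chain_code :: "nat \<Rightarrow> nat \<Rightarrow> nat \<Rightarrow> nat \<Rightarrow> bool" where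
  "is_product_chain_code x e v d \<longleftrightarrow>
     chain_code x (code_length (input_w x) + code_length v) (code_nth_append (input_w x) v) d \<and>
     code_nth d 0 = e"

text \<open>By pumping down, if such a chain exists then there is one whose words have length at most
  \<open>|e| + \<Prod>i<|w|. Suc (code of the automaton for w\<^sub>i)\<close>, since codes bound states.\<close>

definition left_inverse_search_bound :: "nat \<Rightarrow> nat \<Rightarrow> nat" where
  "left_inverse_search_bound x e =
     list_code_bound (Suc (code_length (input_w x)))
       (list_code_bound
         (code_length e + (\<Prod>i<code_length (input_w x). Suc (code_nth (input_Na x) (code_nth (input_w x) i))))
         (input_k x))"

definition has_left_inverse_code :: "nat \<Rightarrow> nat \<Rightarrow> bool" where
  "has_left_inverse_code x e \<longleftrightarrow> (\<exists>c<Suc (left_inverse_search_bound x e). is_left_inverse_chain_code x e c)"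

text \<open>The guard makes the unbounded search for both chains terminate also when \<open>\<sigma> w\<close> has no left
  inverse.\<close>

definition is_chains_witness :: "nat \<Rightarrow> nat \<Rightarrow> nat \<Rightarrow> bool" where
  "is_chains_witness x e p \<longleftrightarrow> (has_left_inverse_code x e \<longrightarrow>
     is_left_inverse_chain_code x e (c_fst p) \<and> is_product_chain_code x e (code_nth (c_fst p) 0) (c_snd p))"

definition chains_witness :: "nat \<Rightarrow> nat \<Rightarrow> nat" where
  "chains_witness x e = (LEAST p. is_chains_witness x e p)"

definition decide_unit :: "nat \<Rightarrow> nat" where
  "decide_unit x = (let e = identity_code x; d = c_snd (chains_witness x e) in
     of_bool (has_left_inverse_code x e \<and>
       accepts_pair_code (input_Neq x) (code_nth d (code_length d - 1)) e))"

definition searches_terminate :: "nat \<Rightarrow> bool" where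
  "searches_terminate x \<longleftrightarrow> (\<exists>u. is_identity_code x u) \<and> (\<exists>p. is_chains_witness x (identity_code x) p)"

lemma computable_decide_unit: "computable_on {x. searches_terminate x} decide_unit"
proof -
  let ?D = "{x. searches_terminate x}"
  have identity: "computable_on ?D identity_code"
    unfolding identity_code_def
  proof (rule computable_Least)
    show "decidable_on UNIV (\<lambda>q. is_identity_code (c_fst q) (c_snd q))"
      unfolding is_identity_code_def input_k_def input_NL_def input_Na_def input_io_def
      by (intro computable_intros decidable_accepts_word_code decidable_accepts_pair_code)
  qed (auto simp: searches_terminate_def)
  have "decidable_on UNIV (\<lambda>q. is_chains_witness (c_fst (c_fst q)) (c_snd (c_fst q)) (c_snd q))"
    unfolding is_chains_witness_def has_left_inverse_code_def left_inverse_search_bound_def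
      is_left_inverse_chain_code_def is_product_chain_code_def chain_code_def code_nth_append_def
      input_k_def input_Na_def input_w_def
    by (intro computable_intros decidable_accepts_pair_code)
  then have "computable_on {y. \<exists>p. is_chains_witness (c_fst y) (c_snd y) p}
      (\<lambda>y. LEAST p. is_chains_witness (c_fst y) (c_snd y) p)"
    by (rule computable_Least) simp
  then have "computable_on ?D (\<lambda>x. (\<lambda>y. LEAST p. is_chains_witness (c_fst y) (c_snd y) p)
      (c_pair x (identity_code x)))"
    by (rule computable_comp[OF _ computable_c_pair[OF computable_id identity]])
      (simp add: searches_terminate_def)
  then have witness: "computable_on ?D (\<lambda>x. chains_witness x (identity_code x))"
    by (simp add: chains_witness_def)
  have "decidable_on UNIV (\<lambda>q. has_left_inverse_code (c_fst q) (c_snd q))"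
    unfolding has_left_inverse_code_def left_inverse_search_bound_def
      is_left_inverse_chain_code_def chain_code_def input_k_def input_Na_def input_w_def
    by (intro computable_intros decidable_accepts_pair_code)
  from computable_binary[OF this computable_id identity]
  have "decidable_on ?D (\<lambda>x. has_left_inverse_code x (identity_code x))" .
  then show ?thesis
    unfolding decide_unit_def Let_def input_Neq_def
    by (intro computable_intros decidable_accepts_pair_code identity witness)
qed

section \<open>Correctness\<close>

lemma (in monoid) Units_iff_right_inverse:
  assumes "s \<in> carrier G" "t \<in> carrier G" "t \<otimes> s = \<one>"
  shows "s \<in> Units G \<longleftrightarrow> s \<otimes> t = \<one>"
  using assms inv_unique[of t s] unfolding Units_def by blast

locale interpreted_instance = monoid M for M :: "nat monoid" (structure) +
  fixes k NL Neq Na io w \<sigma>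
  assumes pre_automatic: "pre_automatic k NL Neq Na"
    and interp: "is_interpretation k NL Neq Na M \<sigma>"
    and consistent: "consistent_with k NL io \<sigma>"
    and word: "w \<in> lists {0..<k}"
begin

abbreviation "input_code \<equiv> enc_input k NL Neq Na io w"
abbreviation "L \<equiv> lang NL"

abbreviation chain_along :: "nat list \<Rightarrow> nat list list \<Rightarrow> bool" where
  "chain_along z zs \<equiv> chain (length z) (\<lambda>i. Na ! (z ! i)) zs"

lemma length_Na [simp]: "length Na = k"
  using pre_automatic by (simp add: pre_automatic_def)

lemma input_parts [simp]:
  "input_k input_code = k"
  "input_NL input_code = enc_nfa id NL"
  "input_Neq input_code = enc_nfa enc_pair_letter Neq"
  "input_Na input_code = enc_list (map (enc_nfa enc_pair_letter) Na)"
  "input_io input_code = enc_list (map enc_list io)"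
  "input_w input_code = enc_list w"
  unfolding enc_input_def input_k_def input_NL_def input_Neq_def input_Na_def input_io_def input_w_def
  by (simp_all add: numeral_eq_Suc)

lemma L_alphabet: "u \<in> L \<Longrightarrow> u \<in> lists {0..<k}"
  using lang_letters[of u NL] pre_automatic unfolding pre_automatic_def by auto

lemma \<sigma>_Nil: "\<sigma> [] = \<one>"
  and \<sigma>_closed: "u \<in> lists {0..<k} \<Longrightarrow> \<sigma> u \<in> carrier M"
  and \<sigma>_append: "u \<in> lists {0..<k} \<Longrightarrow> v \<in> lists {0..<k} \<Longrightarrow> \<sigma> (u @ v) = \<sigma> u \<otimes> \<sigma> v"
  and \<sigma>_L: "\<sigma> ` L = carrier M"
  using interp by (simp_all add: is_interpretation_def word_morphism_def)

lemma Na_iff: "a < k \<Longrightarrow> u \<in> L \<Longrightarrow> v \<in> L \<Longrightarrow> pad_conv u v \<in> lang (Na ! a) \<longleftrightarrow> \<sigma> (u @ [a]) = \<sigma> v"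
  and Neq_iff: "u \<in> L \<Longrightarrow> v \<in> L \<Longrightarrow> pad_conv u v \<in> lang Neq \<longleftrightarrow> \<sigma> u = \<sigma> v"
  using interp by (simp_all add: is_interpretation_def)

lemma length_io [simp]: "length io = k"
  using consistent by (simp add: consistent_with_def)

lemma io_L: "a < k \<Longrightarrow> io ! a \<in> L"
  and \<sigma>_io: "a < k \<Longrightarrow> \<sigma> [a] = \<sigma> (io ! a)"
  using consistent by (simp_all add: consistent_with_def)

lemma Na_pair_L:
  assumes "a < k" "pad_conv u v \<in> lang (Na ! a)"
  shows "u \<in> L" "v \<in> L"
proof -
  have "lang (Na ! a) \<subseteq> {pad_conv u v | u v. u \<in> L \<and> v \<in> L}"
    using pre_automatic assms(1) length_Na unfolding pre_automatic_def by auto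
  then obtain u' v' where "pad_conv u v = pad_conv u' v'" "u' \<in> L" "v' \<in> L"
    using assms(2) by blast
  then show "u \<in> L" "v \<in> L" using pad_conv_inject by blast+
qed

lemma \<sigma>_representative: "u \<in> lists {0..<k} \<Longrightarrow> \<exists>v\<in>L. \<sigma> v = \<sigma> u"
  using \<sigma>_L \<sigma>_closed by (metis imageE)

lemma is_identity_code_enc_list:
  "is_identity_code input_code (enc_list u) \<longleftrightarrow>
    u \<in> L \<and> (u = [] \<or> ([] \<notin> L \<and> (\<forall>a<k. \<sigma> (u @ [a]) = \<sigma> (io ! a))))"
proof -
  have "accepts_word_code (input_NL input_code) 0 \<longleftrightarrow> [] \<in> L"
    using accepts_word_code_iff[of NL "[]"] by simp
  moreover have "(\<forall>a<k. accepts_pair_code (code_nth (input_Na input_code) a) (enc_list u)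
        (code_nth (input_io input_code) a)) \<longleftrightarrow> (\<forall>a<k. \<sigma> (u @ [a]) = \<sigma> (io ! a))" if "u \<in> L"
    using that by (simp add: accepts_pair_code_iff Na_iff io_L del: enc_list_Cons)
  ultimately show ?thesis
    unfolding is_identity_code_def by (auto simp: accepts_word_code_iff)
qed

lemma exists_identity_code: "\<exists>u. is_identity_code input_code u"
proof (cases "[] \<in> L")
  case True
  then show ?thesis using is_identity_code_enc_list[of "[]"] by blast
next
  case False
  obtain u where u: "u \<in> L" "\<sigma> u = \<one>"
    using \<sigma>_representative[of "[]"] \<sigma>_Nil by auto
  have "\<sigma> (u @ [a]) = \<sigma> (io ! a)" if "a < k" for a
    using that u L_alphabet[OF u(1)] \<sigma>_closed[of "[a]"] by (simp add: \<sigma>_append \<sigma>_io)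
  then show ?thesis using is_identity_code_enc_list[of u] u False by blast
qed

definition identity_word :: "nat list" where "identity_word = dec_list (identity_code input_code)"

lemma identity_code_input: "identity_code input_code = enc_list identity_word"
  by (simp add: identity_word_def)

lemma identity_word_L: "identity_word \<in> L"
  and \<sigma>_identity_word: "\<sigma> identity_word = \<one>"
proof -
  let ?e = identity_word
  have "is_identity_code input_code (identity_code input_code)"
    unfolding identity_code_def using exists_identity_code by (rule LeastI_ex)
  then have e: "?e \<in> L" "?e = [] \<or> [] \<notin> L \<and> (\<forall>a<k. \<sigma> (?e @ [a]) = \<sigma> [a])"
    using is_identity_code_enc_list[of ?e] \<sigma>_io by (auto simp: identity_code_input)
  then show "?e \<in> L" by simp
  have "\<sigma> ?e \<otimes> v = v" if "v \<in> carrier M" and "?e \<noteq> []" for v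
  proof -
    obtain u where u: "u \<in> L" "v = \<sigma> u" using \<sigma>_L \<open>v \<in> carrier M\<close> by blast
    then obtain a u' where au: "u = a # u'" "a < k" "u' \<in> lists {0..<k}"
      using e \<open>?e \<noteq> []\<close> L_alphabet[OF u(1)] by (cases u) auto
    have "\<sigma> ?e \<otimes> \<sigma> [a] = \<sigma> [a]"
      using e \<open>?e \<noteq> []\<close> au L_alphabet[OF e(1)] by (simp add: \<sigma>_append)
    then show ?thesis
      using au u L_alphabet[OF e(1)] \<sigma>_closed \<sigma>_append[of "[a]" u']
      by (simp add: m_assoc[symmetric])
  qed
  then show "\<sigma> ?e = \<one>"
    using \<sigma>_Nil L_alphabet[OF e(1)] \<sigma>_closed by (cases "?e = []") (auto intro: one_unique)
qed

lemma chain_L: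
  assumes chain: "chain_along z zs" and z: "z \<in> lists {0..<k}"
    and ends: "zs ! 0 \<in> L \<or> zs ! length z \<in> L" and "i \<le> length z"
  shows "zs ! i \<in> L"
proof (cases "i < length z")
  case True
  then show ?thesis
    using chain z Na_pair_L(1)[of "z ! i" "zs ! i" "zs ! Suc i"] by (auto simp: chain_def)
next
  case False
  then have i: "i = length z" using \<open>i \<le> length z\<close> by simp
  show ?thesis
  proof (cases z rule: rev_cases)
    case (snoc z' a)
    then show ?thesis
      using chain z i Na_pair_L(2)[of a "zs ! length z'" "zs ! length z"] by (auto simp: chain_def)
  qed (use ends i in auto)
qed

lemma \<sigma>_chain:
  assumes chain: "chain_along z zs" and z: "z \<in> lists {0..<k}"
    and ends: "zs ! 0 \<in> L \<or> zs ! length z \<in> L"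
  shows "\<sigma> (zs ! 0 @ z) = \<sigma> (zs ! length z)"
proof -
  have L: "zs ! i \<in> lists {0..<k}" if "i \<le> length z" for i
    using chain_L[OF chain z ends that] L_alphabet by blast
  have "\<sigma> (zs ! 0 @ take i z) = \<sigma> (zs ! i)" if "i \<le> length z" for i
    using that
  proof (induction i)
    case (Suc i)
    have a: "z ! i < k" "take i z \<in> lists {0..<k}" "take (Suc i) z = take i z @ [z ! i]"
      using Suc.prems z by (auto simp: take_Suc_conv_app_nth dest: in_set_takeD)
    have "\<sigma> (zs ! 0 @ take (Suc i) z) = \<sigma> (zs ! 0 @ take i z) \<otimes> \<sigma> [z ! i]"
      unfolding a(3) append_assoc[symmetric] using L[of 0] a by (intro \<sigma>_append) auto
    also have "\<dots> = \<sigma> (zs ! i) \<otimes> \<sigma> [z ! i]"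
      using Suc by simp
    also have "\<dots> = \<sigma> (zs ! Suc i)"
      using chain Suc.prems L[of i] a Na_iff[of "z ! i" "zs ! i" "zs ! Suc i"] chain_L[OF chain z ends]
      by (simp add: chain_def \<sigma>_append)
    finally show ?case .
  qed simp
  from this[of "length z"] show ?thesis by simp
qed

lemma chain_snoc:
  "chain n NF zs \<Longrightarrow> pad_conv (zs ! n) y \<in> lang (NF n) \<Longrightarrow> chain (Suc n) NF (zs @ [y])"
  by (auto simp: chain_def nth_append less_Suc_eq)

lemma exists_chain:
  assumes "x \<in> L" "y \<in> L" "z \<in> lists {0..<k}" "\<sigma> (x @ z) = \<sigma> y" "z = [] \<Longrightarrow> x = y"
  shows "\<exists>zs. chain_along z zs \<and> zs ! 0 = x \<and> zs ! length z = y"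
  using assms(2-5)
proof (induction z arbitrary: y rule: rev_induct)
  case Nil
  then show ?case by (auto simp: chain_def intro!: exI[of _ "[x]"])
next
  case (snoc a z)
  have z: "z \<in> lists {0..<k}" "a < k" "x @ z \<in> lists {0..<k}"
    using snoc.prems(2) L_alphabet[OF assms(1)] by auto
  obtain y' where y': "y' \<in> L" "\<sigma> y' = \<sigma> (x @ z)" "z = [] \<Longrightarrow> x = y'"
  proof (cases "z = []")
    case True
    then show ?thesis using that[of x] assms(1) by simp
  next
    case False
    then show ?thesis using that \<sigma>_representative[OF z(3)] by blast
  qed
  then obtain zs where zs: "chain_along z zs" "zs ! 0 = x" "zs ! length z = y'"
    using snoc.IH[OF y'(1) z(1) y'(2)[symmetric] y'(3)] by blast
  have "\<sigma> (y' @ [a]) = \<sigma> y' \<otimes> \<sigma> [a]"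
    using L_alphabet[OF y'(1)] z(2) by (intro \<sigma>_append) auto
  also have "\<dots> = \<sigma> (x @ z @ [a])"
    unfolding y'(2) append_assoc[symmetric] using z by (intro \<sigma>_append[symmetric]) auto
  also have "\<dots> = \<sigma> y"
    by (rule snoc.prems(3))
  finally have "\<sigma> (y' @ [a]) = \<sigma> y" .
  then have "pad_conv (zs ! length z) y \<in> lang (Na ! ((z @ [a]) ! length z))"
    using Na_iff[OF z(2) y'(1) snoc.prems(1)] zs(3) by simp
  moreover have "chain (length z) (\<lambda>i. Na ! ((z @ [a]) ! i)) zs"
    using zs(1) by (simp add: chain_def nth_append)
  ultimately have "chain_along (z @ [a]) (zs @ [y])"
    using chain_snoc by simp
  moreover have "length zs = Suc (length z)"
    using zs(1) by (simp add: chain_def)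
  ultimately show ?case
    using zs(2) by (intro exI[of _ "zs @ [y]"]) (simp add: nth_append)
qed

lemma left_inverse_chain:
  assumes "chain_along w ys" "ys ! length w = identity_word"
  shows "ys ! 0 \<in> L" "\<sigma> (ys ! 0) \<otimes> \<sigma> w = \<one>"
proof -
  show x: "ys ! 0 \<in> L"
    using chain_L[OF assms(1) word] assms(2) identity_word_L by auto
  show "\<sigma> (ys ! 0) \<otimes> \<sigma> w = \<one>"
    using \<sigma>_chain[OF assms(1) word] assms(2) identity_word_L \<sigma>_identity_word L_alphabet[OF x] word
    by (simp add: \<sigma>_append)
qed

lemma product_chain:
  assumes x: "x \<in> L" and chain: "chain_along (w @ x) zs"
    and first: "zs ! 0 = identity_word"
  shows "zs ! length (w @ x) \<in> L" "\<sigma> (zs ! length (w @ x)) = \<sigma> w \<otimes> \<sigma> x"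
proof -
  have wx: "w @ x \<in> lists {0..<k}"
    using word L_alphabet[OF x] by simp
  then show "zs ! length (w @ x) \<in> L"
    using chain_L[OF chain] first identity_word_L by auto
  have "\<sigma> (identity_word @ w @ x) = \<sigma> w \<otimes> \<sigma> x"
    using wx word L_alphabet[OF x] L_alphabet[OF identity_word_L] \<sigma>_identity_word \<sigma>_closed
    by (simp add: \<sigma>_append)
  then show "\<sigma> (zs ! length (w @ x)) = \<sigma> w \<otimes> \<sigma> x"
    using \<sigma>_chain[OF chain wx] first identity_word_L by auto
qed

lemma left_invertible_iff_chain:
  "(\<exists>t\<in>carrier M. t \<otimes> \<sigma> w = \<one>) \<longleftrightarrow> (\<exists>ys. chain_along w ys \<and> ys ! length w = identity_word)"
proof
  assume "\<exists>t\<in>carrier M. t \<otimes> \<sigma> w = \<one>"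
  then obtain x where x: "x \<in> L" "\<sigma> x \<otimes> \<sigma> w = \<one>"
    using \<sigma>_L by (metis imageE)
  show "\<exists>ys. chain_along w ys \<and> ys ! length w = identity_word"
  proof (cases "w = []")
    case True
    then show ?thesis by (auto simp: chain_def intro!: exI[of _ "[identity_word]"])
  next
    case False
    have "\<sigma> (x @ w) = \<sigma> identity_word"
      using x \<sigma>_identity_word word L_alphabet by (simp add: \<sigma>_append)
    then show ?thesis
      using exists_chain[OF x(1) identity_word_L word] False by blast
  qed
next
  assume "\<exists>ys. chain_along w ys \<and> ys ! length w = identity_word"
  then obtain ys where "chain_along w ys" "ys ! length w = identity_word"
    by blast
  then show "\<exists>t\<in>carrier M. t \<otimes> \<sigma> w = \<one>"
    using left_inverse_chain \<sigma>_closed L_alphabet by blast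
qed

lemma exists_chain_from:
  assumes "x \<in> L" "z \<in> lists {0..<k}"
  shows "\<exists>zs. chain_along z zs \<and> zs ! 0 = x"
proof (cases "z = []")
  case True
  then show ?thesis by (auto simp: chain_def intro!: exI[of _ "[x]"])
next
  case False
  obtain y where "y \<in> L" "\<sigma> (x @ z) = \<sigma> y"
    using \<sigma>_representative[of "x @ z"] L_alphabet[OF assms(1)] assms(2) by auto
  then show ?thesis
    using exists_chain[OF assms(1) _ assms(2)] False by blast
qed

lemma chain_code_iff:
  assumes z: "z \<in> lists {0..<k}" and letter: "\<And>i. i < length z \<Longrightarrow> letter i = z ! i"
  shows "chain_code input_code (length z) letter (enc_list (map enc_list zs)) \<longleftrightarrow>
    chain_along z zs"
proof (cases "length zs = Suc (length z)")
  case True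
  have "accepts_pair_code (code_nth (input_Na input_code) (letter i))
      (code_nth (enc_list (map enc_list zs)) i) (code_nth (enc_list (map enc_list zs)) (Suc i))
    \<longleftrightarrow> pad_conv (zs ! i) (zs ! Suc i) \<in> lang (Na ! (z ! i))" if "i < length z" for i
  proof -
    have "z ! i < k" using z that by auto
    then show ?thesis
      using that True by (simp add: letter accepts_pair_code_iff del: enc_list_Cons)
  qed
  then show ?thesis
    using True by (simp add: chain_code_def chain_def del: enc_list_Cons)
qed (simp add: chain_code_def chain_def del: enc_list_Cons)

lemma left_inverse_chain_code_iff:
  "is_left_inverse_chain_code input_code (identity_code input_code) (enc_list (map enc_list ys)) \<longleftrightarrow>
    chain_along w ys \<and> ys ! length w = identity_word"
  using chain_code_iff[OF word, of "code_nth (enc_list w)" ys]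
  by (auto simp: is_left_inverse_chain_code_def identity_code_input chain_def simp del: enc_list_Cons)

lemma product_chain_code_iff:
  assumes "x \<in> L"
  shows "is_product_chain_code input_code (identity_code input_code) (enc_list x)
      (enc_list (map enc_list zs)) \<longleftrightarrow>
    chain_along (w @ x) zs \<and> zs ! 0 = identity_word"
proof -
  have "w @ x \<in> lists {0..<k}"
    using word L_alphabet[OF assms] by simp
  moreover have "code_nth_append (enc_list w) (enc_list x) i = (w @ x) ! i" if "i < length (w @ x)" for i
    using that by (simp add: code_nth_append_def nth_append del: enc_list_Cons)
  ultimately show ?thesis
    using chain_code_iff[of "w @ x" "code_nth_append (enc_list w) (enc_list x)" zs]
    by (auto simp: is_product_chain_code_def identity_code_input chain_def simp del: enc_list_Cons)
qed

abbreviation pumping_bound :: nat where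
  "pumping_bound \<equiv> length identity_word + (\<Prod>i<length w. Suc (enc_nfa enc_pair_letter (Na ! (w ! i))))"

lemma chain_code_le_left_inverse_search_bound:
  assumes chain: "chain_along w ys" "ys ! length w = identity_word"
    and short: "\<And>i. i < Suc (length w) \<Longrightarrow> length (ys ! i) \<le> pumping_bound"
  shows "enc_list (map enc_list ys) \<le> left_inverse_search_bound input_code (identity_code input_code)"
proof -
  have length_ys: "length ys = Suc (length w)"
    using chain by (simp add: chain_def)
  have "enc_list y \<le> list_code_bound pumping_bound k" if y: "y \<in> set ys" for y
  proof -
    obtain i where i: "i < Suc (length w)" "y = ys ! i"
      using y length_ys by (auto simp: in_set_conv_nth)
    then have "y \<in> lists {0..<k}"
      using chain_L[OF chain(1) word] chain(2) identity_word_L L_alphabet by auto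
    then show ?thesis
      using short[OF i(1)] i by (intro enc_list_le_list_code_bound) auto
  qed
  then have "enc_list (map enc_list ys) \<le> list_code_bound (Suc (length w)) (list_code_bound pumping_bound k)"
    using length_ys by (intro enc_list_le_list_code_bound) auto
  moreover have "(\<Prod>i<length w. Suc (code_nth (enc_list (map (enc_nfa enc_pair_letter) Na)) (w ! i))) =
      (\<Prod>i<length w. Suc (enc_nfa enc_pair_letter (Na ! (w ! i))))"
    using word by (intro prod.cong) auto
  ultimately show ?thesis
    by (simp add: left_inverse_search_bound_def identity_code_input del: enc_list_Cons)
qed

lemma has_left_inverse_code_iff:
  "has_left_inverse_code input_code (identity_code input_code) \<longleftrightarrow>
    (\<exists>ys. chain_along w ys \<and> ys ! length w = identity_word)"
proof
  assume "has_left_inverse_code input_code (identity_code input_code)"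
  then obtain c where "is_left_inverse_chain_code input_code (identity_code input_code) c"
    unfolding has_left_inverse_code_def by blast
  then show "\<exists>ys. chain_along w ys \<and> ys ! length w = identity_word"
    using left_inverse_chain_code_iff[of "dec_words c"] by auto
next
  assume "\<exists>ys. chain_along w ys \<and> ys ! length w = identity_word"
  then obtain ys0 where ys0: "chain_along w ys0" "ys0 ! length w = identity_word"
    by blast
  have "\<exists>ys. chain_along w ys \<and> ys ! length w = identity_word \<and>
      (\<forall>i<Suc (length w). length (ys ! i) \<le> pumping_bound)"
    by (rule chain_pump_down[OF ys0]) (rule run_states_le_enc_nfa)
  then obtain ys where ys: "chain_along w ys" "ys ! length w = identity_word"
    "\<And>i. i < Suc (length w) \<Longrightarrow> length (ys ! i) \<le> pumping_bound"
    by blast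
  have "enc_list (map enc_list ys) < Suc (left_inverse_search_bound input_code (identity_code input_code))"
    using chain_code_le_left_inverse_search_bound[OF ys] by simp
  moreover have "is_left_inverse_chain_code input_code (identity_code input_code) (enc_list (map enc_list ys))"
    using ys left_inverse_chain_code_iff by blast
  ultimately show "has_left_inverse_code input_code (identity_code input_code)"
    unfolding has_left_inverse_code_def by blast
qed

lemma exists_chains_witness: "\<exists>p. is_chains_witness input_code (identity_code input_code) p"
proof (cases "has_left_inverse_code input_code (identity_code input_code)")
  case True
  then obtain ys where ys: "chain_along w ys" "ys ! length w = identity_word"
    using has_left_inverse_code_iff by blast
  have x: "ys ! 0 \<in> L"
    using left_inverse_chain[OF ys] by simp
  obtain zs where zs: "chain_along (w @ ys ! 0) zs" "zs ! 0 = identity_word"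
    using exists_chain_from[OF identity_word_L, of "w @ ys ! 0"] word L_alphabet[OF x] by auto
  have "code_nth (enc_list (map enc_list ys)) 0 = enc_list (ys ! 0)"
    using ys(1) by (simp add: chain_def del: enc_list_Cons)
  then have "is_chains_witness input_code (identity_code input_code)
      (c_pair (enc_list (map enc_list ys)) (enc_list (map enc_list zs)))"
    using ys zs left_inverse_chain_code_iff product_chain_code_iff[OF x]
    by (simp add: is_chains_witness_def del: enc_list_Cons)
  then show ?thesis ..
qed (simp add: is_chains_witness_def)

lemma searches_terminate_input: "searches_terminate input_code"
  unfolding searches_terminate_def using exists_identity_code exists_chains_witness by blast

lemma decide_unit_if_left_invertible:
  assumes "has_left_inverse_code input_code (identity_code input_code)"
  obtains x where "x \<in> L" "\<sigma> x \<otimes> \<sigma> w = \<one>" "decide_unit input_code = of_bool (\<sigma> w \<otimes> \<sigma> x = \<one>)"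
proof -
  define p where "p = chains_witness input_code (identity_code input_code)"
  define ys where "ys = dec_words (c_fst p)"
  define zs where "zs = dec_words (c_snd p)"
  define x where "x = ys ! 0"
  have "is_chains_witness input_code (identity_code input_code) p"
    unfolding p_def chains_witness_def using exists_chains_witness by (rule LeastI_ex)
  then have "is_left_inverse_chain_code input_code (identity_code input_code) (enc_list (map enc_list ys))"
    and product: "is_product_chain_code input_code (identity_code input_code)
      (code_nth (enc_list (map enc_list ys)) 0) (enc_list (map enc_list zs))"
    using assms by (simp_all add: is_chains_witness_def ys_def zs_def)
  then have ys: "chain_along w ys" "ys ! length w = identity_word"
    using left_inverse_chain_code_iff by auto
  have x: "x \<in> L" and "\<sigma> x \<otimes> \<sigma> w = \<one>"
    using left_inverse_chain[OF ys] by (simp_all add: x_def)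
  moreover have zs: "chain_along (w @ x) zs" "zs ! 0 = identity_word"
    using product product_chain_code_iff[OF x] ys(1)
    by (simp_all add: chain_def x_def del: enc_list_Cons)
  note last = product_chain[OF x zs]
  have "code_nth (c_snd p) (code_length (c_snd p) - 1) = enc_list (zs ! length (w @ x))"
    using enc_list_dec_words[of "c_snd p"] zs(1) unfolding zs_def
    by (metis chain_def code_length_enc_list code_nth_enc_list diff_Suc_1 length_map lessI nth_map)
  then have "decide_unit input_code = of_bool (\<sigma> (zs ! length (w @ x)) = \<sigma> identity_word)"
    using assms last(1) identity_word_L
    by (simp add: decide_unit_def p_def identity_code_input accepts_pair_code_iff Neq_iff del: enc_list_Cons)
  ultimately show ?thesis
    using that x last(2) \<sigma>_identity_word by simp
qed

lemma decide_unit_input: "decide_unit input_code = (if \<sigma> w \<in> Units M then 1 else 0)"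
proof (cases "has_left_inverse_code input_code (identity_code input_code)")
  case True
  then obtain x where "x \<in> L" "\<sigma> x \<otimes> \<sigma> w = \<one>" "decide_unit input_code = of_bool (\<sigma> w \<otimes> \<sigma> x = \<one>)"
    by (rule decide_unit_if_left_invertible)
  moreover have "\<sigma> w \<in> carrier M" "\<sigma> x \<in> carrier M"
    using \<sigma>_closed word L_alphabet[OF \<open>x \<in> L\<close>] by auto
  ultimately show ?thesis
    using Units_iff_right_inverse[of "\<sigma> w" "\<sigma> x"] by simp
next
  case False
  then have "\<sigma> w \<notin> Units M"
    using has_left_inverse_code_iff left_invertible_iff_chain unfolding Units_def by blast
  then show ?thesis
    using False by (simp add: decide_unit_def)
qed

end

theorem proposition4p5:
  shows "\<exists>alg :: recf.
    \<forall>k NL Neq Na io w (M :: nat monoid) \<sigma>.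
      monoid M \<and>
      pre_automatic k NL Neq Na \<and>
      is_interpretation k NL Neq Na M \<sigma> \<and>
      consistent_with k NL io \<sigma> \<and>
      w \<in> lists {0..<k}
      \<longrightarrow> rec_eval alg [enc_input k NL Neq Na io w] (if \<sigma> w \<in> Units M then 1 else 0)"
proof -
  obtain alg where alg: "\<And>x. searches_terminate x \<Longrightarrow> rec_eval alg [x] (decide_unit x)"
    using computable_decide_unit unfolding computable_on_def by blast
  show ?thesis
  proof (intro exI[of _ alg] allI impI)
    fix k NL Neq Na io w and M :: "nat monoid" and \<sigma>
    assume "monoid M \<and> pre_automatic k NL Neq Na \<and> is_interpretation k NL Neq Na M \<sigma> \<and>
      consistent_with k NL io \<sigma> \<and> w \<in> lists {0..<k}"
    then interpret interpreted_instance M k NL Neq Na io w \<sigma>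
      by (intro interpreted_instance.intro interpreted_instance_axioms.intro) auto
    show "rec_eval alg [enc_input k NL Neq Na io w] (if \<sigma> w \<in> Units M then 1 else 0)"
      using alg[OF searches_terminate_input] decide_unit_input by simp
  qed
qed

end
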